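(* Let $F$ be a generic, supertransversal fully-connected ReLU network with input dimension $n_0$ and at least $n_0$ hidden units in its first layer. Let $2\le k\le m+1$ and let $C$ be a cell of $\mathcal{C}(F_{(k-1)})$. Then for every $i\le k$ and every $j$, the node map $F_{ij}$ restricted to $C$ is affine; let $A_{ij}:\mathbb{R}^{n_0}\to\mathbb{R}$ denote the corresponding affine map. Then: (1) Every $0$-cell of $\mathcal{C}(F_{(k)})$ which is contained in the closure of $C$ and which is not a $0$-cell of $\mathcal{C}(F_{(k-1)})$ is the solution of a system of $n_0$ affine equations, of which $\ell$ (with $1\le\ell\le n_0$) are of the form $A_{kj}(x)=0$ and $n_0-\ell$ (with $0\le n_0-\ell\le n_0-1$) are of the form $A_{ij}(x)=0$ with $i<k$, where the latter $n_0-\ell$ maps $A_{ij}$ are such that there exists a vertex of $C$ in the intersection of the corresponding bent hyperplanes (that is, these equations describe the affine span of a face of $C$). (2) A solution $x$ of a system of equations as described in (1) is a $0$-cell of $\mathcal{C}(F_{(k)})$ contained in the closure of $C$ if and only if $s_{ij}(x)=s_{ij}(C)$ for all remaining pairs $(i,j)$ with $i\le k-1$ (those not among the equations of the system).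
   Context: A ReLU network of architecture $(n_0,\dots,n_m,1)$: affine maps $A_i:\mathbb{R}^{n_{i-1}}\to\mathbb{R}^{n_i}$, $1\le i\le m+1$, $n_{m+1}=1$; $F_i=\mathrm{ReLU}\circ A_i$ ($i\le m$), $G=A_{m+1}$, $F=G\circ F_m\circ\cdots\circ F_1$, $F_{(k)}=F_k\circ\cdots\circ F_1$ ($F_{(0)}=\mathrm{id}$; for $k=m+1$ the last map is $G$), $F^{(k)}=G\circ F_m\circ\cdots\circ F_k$ ($F^{(m+1)}=G$). Node maps $F_{ij}=\pi_j\circ A_i\circ F_{(i-1)}:\mathbb{R}^{n_0}\to\mathbb{R}$, $1\le i\le m+1$, $1\le j\le n_i$. Bent hyperplane: $F_{ij}^{-1}(0)$. For a point $x$, $s_{ij}(x)=\mathrm{sgn}(F_{ij}(x))$; for a cell $C$, $s_{ij}(C)=\mathrm{sgn}(F_{ij}(y))$ for $y$ in the relative interior of $C$. Polyhedra are finite intersections of closed half-spaces. $R^{(i)}$ is the polyhedral complex on $\mathbb{R}^{n_{i-1}}$ induced by the hyperplanes $H_{ij}=\{\pi_jA_i=0\}$ (cells: nonempty intersections of one choice among $\{\pi_jA_i\ge0\},\{\pi_jA_i\le0\},\{\pi_jA_i=0\}$ for each $j$). Canonical polyhedral complexes: $\mathcal{C}(F_{(1)})=R^{(1)}$, $\mathcal{C}(F_{(k)})=\{C\cap F_{(k-1)}^{-1}(R)\neq\emptyset: C\in\mathcal{C}(F_{(k-1)}),R\in R^{(k)}\}$, $2\le k\le m+1$; likewise $\mathcal{C}(F^{(k)})$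 on $\mathbb{R}^{n_{k-1}}$, $\mathcal{C}(F^{(m+1)})=R^{(m+1)}$. Generic: for every $i$, any $k$ of the hyperplanes $H_{i1},\dots,H_{in_i}$ meet in an affine subspace of dimension $n_{i-1}-k$ (empty if $k>n_{i-1}$). Supertransversal: for every $1\le i\le m$, the restriction of $F_i$ to the relative interior of each cell of $R^{(i)}$ is transverse to the relative interior of every cell of $\mathcal{C}(F^{(i+1)})$. *)

theory Defs
  imports "HOL-Analysis.Analysis" "HOL-Library.Function_Algebras"
begin

text \<open>Since the layer widths n_0, ..., n_{m+1} vary, R^n is represented inside the
type nat => real as the set of sequences vanishing from index n on.
Topological notions (closure) use the product topology of nat => real, which
induces the Euclidean topology on each such R^n.\<close>

type_synonym vect = "nat \<Rightarrow> real"

definition Rn :: "nat \<Rightarrow> vect set" where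
  "Rn n = {x. \<forall>l\<ge>n. x l = 0}"

definition fscale :: "real \<Rightarrow> vect \<Rightarrow> vect" where
  "fscale c x = (\<lambda>l. c * x l)"

lemma vector_space_fscale: "vector_space fscale"
  by unfold_locales (auto simp: fscale_def algebra_simps)

abbreviation fspan :: "vect set \<Rightarrow> vect set" where
  "fspan \<equiv> module.span fscale"

abbreviation fdim :: "vect set \<Rightarrow> nat" where
  "fdim \<equiv> vector_space.dim fscale"

definition affine_comb :: "(vect \<Rightarrow> real) \<Rightarrow> vect set \<Rightarrow> vect" where
  "affine_comb c T = (\<lambda>l. \<Sum>t\<in>T. c t * t l)"

definition faff :: "vect set \<Rightarrow> vect set" where
  "faff S = {y. \<exists>T c. finite T \<and> T \<subseteq> S \<and> T \<noteq> {} \<and> sum c T = 1 \<and> y = affine_comb c T}"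

definition affdim :: "vect set \<Rightarrow> nat" where
  "affdim K = fdim ((\<lambda>y. y - (SOME x. x \<in> K)) ` K)"

definition frelint :: "vect set \<Rightarrow> vect set" where
  "frelint S = {x \<in> S. \<exists>e>0. \<forall>y\<in>faff S. (\<forall>l. \<bar>y l - x l\<bar> < e) \<longrightarrow> y \<in> S}"

definition affine_fun_on :: "vect set \<Rightarrow> (vect \<Rightarrow> real) \<Rightarrow> bool" where
  "affine_fun_on S f \<longleftrightarrow>
     (\<forall>T c. finite T \<and> T \<subseteq> S \<and> T \<noteq> {} \<and> sum c T = 1 \<longrightarrow>
        f (affine_comb c T) = (\<Sum>t\<in>T. c t * f t))"

definition is_vertex :: "vect \<Rightarrow> vect set \<Rightarrow> bool" where
  "is_vertex u C \<longleftrightarrow> u \<in> C \<and>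
     \<not> (\<exists>a\<in>C. \<exists>b\<in>C. a \<noteq> b \<and> (\<exists>t. 0 < t \<and> t < 1 \<and> u = (\<lambda>l. (1 - t) * a l + t * b l)))"

text \<open>A network of architecture (n_0, ..., n_m, 1): depth m, widths dims i,
weights wt i j l (layer i, output j, input l), biases bs i j; layers i = 1..m+1.\<close>
record net =
  depth :: nat
  dims :: "nat \<Rightarrow> nat"
  wt :: "nat \<Rightarrow> nat \<Rightarrow> nat \<Rightarrow> real"
  bs :: "nat \<Rightarrow> nat \<Rightarrow> real"

definition wf_net :: "net \<Rightarrow> bool" where
  "wf_net N \<longleftrightarrow> dims N (depth N + 1) = 1 \<and> (\<forall>i\<le>depth N + 1. 0 < dims N i)"

definition aff_layer :: "net \<Rightarrow> nat \<Rightarrow> vect \<Rightarrow> vect" where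
  "aff_layer N i x = (\<lambda>j. if j < dims N i
      then (\<Sum>l<dims N (i - 1). wt N i j l * x l) + bs N i j else 0)"

definition relu_v :: "vect \<Rightarrow> vect" where
  "relu_v y = (\<lambda>j. max 0 (y j))"

definition layer :: "net \<Rightarrow> nat \<Rightarrow> vect \<Rightarrow> vect" where
  "layer N i = (if i \<le> depth N then relu_v \<circ> aff_layer N i else aff_layer N i)"

fun comp :: "net \<Rightarrow> nat \<Rightarrow> nat \<Rightarrow> vect \<Rightarrow> vect" where
  "comp N a 0 = id"
| "comp N a (Suc b) = (if Suc b < a then id else layer N (Suc b) \<circ> comp N a b)"

text \<open>F_{(k)} = comp N 1 k;  node maps F_{ij} = pi_j o A_i o F_{(i-1)}\<close>
definition node :: "net \<Rightarrow> nat \<Rightarrow> nat \<Rightarrow> vect \<Rightarrow> real" where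
  "node N i j x = aff_layer N i (comp N 1 (i - 1) x) j"

text \<open>sign choice s: 0 means {=0}, positive means {>=0}, negative means {<=0}\<close>
definition sign_ok :: "int \<Rightarrow> real \<Rightarrow> bool" where
  "sign_ok s v \<longleftrightarrow> (if s = 0 then v = 0 else 0 \<le> real_of_int s * v)"

definition hyp_cells :: "net \<Rightarrow> nat \<Rightarrow> vect set set" where
  "hyp_cells N i = {R. R \<noteq> {} \<and> (\<exists>\<sigma>::nat \<Rightarrow> int. (\<forall>j. \<sigma> j \<in> {-1, 0, 1}) \<and>
      R = {y \<in> Rn (dims N (i - 1)). \<forall>j<dims N i. sign_ok (\<sigma> j) (aff_layer N i y j)})}"

text \<open>canon N a d: canonical polyhedral complex (on R^{n_{a-1}}) of the composite
of layers a, ..., a+d.  Thus C(F_{(k)}) = canon N 1 (k-1) and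
C(F^{(k)}) = canon N k (m+1-k).\<close>
fun canon :: "net \<Rightarrow> nat \<Rightarrow> nat \<Rightarrow> vect set set" where
  "canon N a 0 = hyp_cells N a"
| "canon N a (Suc d) = {D. D \<noteq> {} \<and> (\<exists>C R. C \<in> canon N a d \<and> R \<in> hyp_cells N (a + d + 1) \<and>
      D = C \<inter> comp N a (a + d) -` R)}"

definition sgn_pt :: "net \<Rightarrow> nat \<Rightarrow> nat \<Rightarrow> vect \<Rightarrow> real" where
  "sgn_pt N i j x = sgn (node N i j x)"

definition sgn_cell :: "net \<Rightarrow> nat \<Rightarrow> nat \<Rightarrow> vect set \<Rightarrow> real" where
  "sgn_cell N i j C = sgn (node N i j (SOME y. y \<in> frelint C))"

definition generic :: "net \<Rightarrow> bool" where
  "generic N \<longleftrightarrow> (\<forall>i\<in>{1..depth N + 1}. \<forall>S\<subseteq>{..<dims N i}.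
     (let K = {y \<in> Rn (dims N (i - 1)). \<forall>j\<in>S. aff_layer N i y j = 0} in
       (card S \<le> dims N (i - 1) \<longrightarrow> K \<noteq> {} \<and> affdim K = dims N (i - 1) - card S) \<and>
       (dims N (i - 1) < card S \<longrightarrow> K = {})))"

text \<open>Transversality of the affine map f|_{relint R} to the (relatively open, flat)
submanifold relint D of R^n: at every x in relint R with f x in relint D, the image of
the tangent space of relint R under the differential of f (for a map affine on R this is
the span of the differences f y - f x, y in relint R) plus the tangent space of relint D
(span of differences of its points) is all of R^n.\<close>
definition transverse_on :: "(vect \<Rightarrow> vect) \<Rightarrow> vect set \<Rightarrow> vect set \<Rightarrow> nat \<Rightarrow> bool" where
  "transverse_on f R D n \<longleftrightarrow> (\<forall>x\<in>frelint R. f x \<in> frelint D \<longrightarrow>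
     fspan ({f y - f x | y. y \<in> frelint R} \<union> {z - w | z w. z \<in> frelint D \<and> w \<in> frelint D})
       = Rn n)"

definition supertransversal :: "net \<Rightarrow> bool" where
  "supertransversal N \<longleftrightarrow> (\<forall>i\<in>{1..depth N}. \<forall>R\<in>hyp_cells N i.
     \<forall>D\<in>canon N (i + 1) (depth N - i). transverse_on (layer N i) R D (dims N i))"

end

theory Submission
  imports Defs
begin

text \<open>
  On a cell \<open>C\<close> of \<open>C(F_(k-1))\<close> every ReLU of the first \<open>k - 1\<close> layers has a fixed activation,
  so all node maps of layers \<open>\<le> k\<close> are affine on \<open>C\<close>. Following a point through the layers,
  genericity and supertransversality give a dimension count showing that at most \<open>n\<^sub>0\<close> nodes
  vanish at any point. At a new 0-cell \<open>v\<close> of \<open>C(F_(k))\<close> in the closure of \<open>C\<close> at least \<open>n\<^sub>0\<close>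
  nodes vanish, since moving along a direction on which all of them stay zero would preserve every
  sign; so exactly \<open>n\<^sub>0\<close> vanish, and their equations have \<open>v\<close> as unique solution. One of them
  lies in layer \<open>k\<close> because \<open>v\<close> is not a 0-cell of \<open>C(F_(k-1))\<close>, and the others vanish at a vertex
  of \<open>C\<close>, reached by walking inside \<open>C\<close> while accumulating vanishing nodes. Conversely, a solution
  of such a system is a 0-cell in the closure of \<open>C\<close> iff the remaining nodes have the signs of
  \<open>C\<close>: a further vanishing node would be one too many.
\<close>

interpretation fv: vector_space fscale by (rule vector_space_fscale)

subsection \<open>Affine functionals on \<open>R^n\<close>\<close>

definition affine_form :: "nat \<Rightarrow> (vect \<Rightarrow> real) \<Rightarrow> bool" where
  "affine_form n f \<longleftrightarrow> (\<exists>c b. \<forall>y. f y = (\<Sum>l<n. c l * y l) + b)"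

definition linear_part :: "(vect \<Rightarrow> real) \<Rightarrow> vect \<Rightarrow> real" where
  "linear_part f d = f d - f 0"

lemma affine_form_const: "affine_form n (\<lambda>y. b)"
  unfolding affine_form_def by (rule exI[of _ "\<lambda>l. 0"]) auto

lemma affine_form_coord:
  assumes "l < n" shows "affine_form n (\<lambda>y. y l)"
  unfolding affine_form_def
proof (intro exI allI)
  fix y :: vect
  have "(\<Sum>i<n. (if i = l then 1 else 0) * y i) = (\<Sum>i<n. if i = l then y i else 0)"
    by (rule sum.cong) auto
  then show "y l = (\<Sum>i<n. (if i = l then 1 else 0) * y i) + 0"
    using assms by simp
qed

lemma affine_form_add:
  assumes "affine_form n f" "affine_form n g" shows "affine_form n (\<lambda>y. f y + g y)"
proof -
  obtain c b where f: "\<And>y. f y = (\<Sum>l<n. c l * y l) + b" using assms(1) by (auto simp: affine_form_def)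
  obtain c' b' where g: "\<And>y. g y = (\<Sum>l<n. c' l * y l) + b'" using assms(2) by (auto simp: affine_form_def)
  show ?thesis unfolding affine_form_def
    by (rule exI[of _ "\<lambda>l. c l + c' l"], rule exI[of _ "b + b'"])
       (simp add: f g algebra_simps sum.distrib)
qed

lemma affine_form_cmult:
  assumes "affine_form n f" shows "affine_form n (\<lambda>y. r * f y)"
proof -
  obtain c b where f: "\<And>y. f y = (\<Sum>l<n. c l * y l) + b" using assms by (auto simp: affine_form_def)
  show ?thesis unfolding affine_form_def
    by (rule exI[of _ "\<lambda>l. r * c l"], rule exI[of _ "r * b"])
       (simp add: f algebra_simps sum_distrib_left)
qed

lemma affine_form_sum:
  "finite I \<Longrightarrow> (\<And>i. i \<in> I \<Longrightarrow> affine_form n (f i)) \<Longrightarrow> affine_form n (\<lambda>y. \<Sum>i\<in>I. f i y)"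
  by (induction I rule: finite_induct) (auto intro: affine_form_add affine_form_const)

lemma affine_form_affine_comb:
  assumes "affine_form n f" "finite T" "sum c T = 1"
  shows "f (affine_comb c T) = (\<Sum>t\<in>T. c t * f t)"
proof -
  obtain cc b where f: "\<And>y. f y = (\<Sum>l<n. cc l * y l) + b" using assms(1) by (auto simp: affine_form_def)
  have "(\<Sum>l<n. cc l * (\<Sum>t\<in>T. c t * t l)) = (\<Sum>t\<in>T. c t * (\<Sum>l<n. cc l * t l))"
    by (simp add: sum_distrib_left mult.left_commute sum.swap[of _ T])
  moreover have "b = (\<Sum>t\<in>T. c t * b)" using assms(3) by (simp add: sum_distrib_right[symmetric])
  ultimately show ?thesis
    by (simp add: f affine_comb_def distrib_left sum.distrib)
qed

lemma affine_form_imp_affine_fun_on: "affine_form n f \<Longrightarrow> affine_fun_on S f"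
  unfolding affine_fun_on_def using affine_form_affine_comb by blast

lemma affine_form_zero_on_faff:
  assumes "affine_form n f" "y \<in> faff S" "\<forall>z\<in>S. f z = 0"
  shows "f y = 0"
proof -
  obtain T c where T: "finite T" "T \<subseteq> S" "sum c T = 1" "y = affine_comb c T"
    using assms(2) by (auto simp: faff_def)
  then show ?thesis
    using affine_form_affine_comb[OF assms(1) T(1,3)] assms(3) by (auto intro!: sum.neutral)
qed

lemma affine_form_diff:
  assumes "affine_form n f" shows "f x - f y = linear_part f (x - y)"
proof -
  obtain c b where f: "\<And>y. f y = (\<Sum>l<n. c l * y l) + b" using assms by (auto simp: affine_form_def)
  show ?thesis by (simp add: linear_part_def f right_diff_distrib sum_subtractf)
qed

lemma linear_part_add:
  assumes "affine_form n f" shows "linear_part f (x + y) = linear_part f x + linear_part f y"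
proof -
  obtain c b where f: "\<And>y. f y = (\<Sum>l<n. c l * y l) + b" using assms by (auto simp: affine_form_def)
  show ?thesis by (simp add: linear_part_def f algebra_simps sum.distrib)
qed

lemma linear_part_scale:
  assumes "affine_form n f" shows "linear_part f (fscale r x) = r * linear_part f x"
proof -
  obtain c b where f: "\<And>y. f y = (\<Sum>l<n. c l * y l) + b" using assms by (auto simp: affine_form_def)
  show ?thesis by (simp add: linear_part_def f algebra_simps sum_distrib_left fscale_def)
qed

lemma affine_form_line:
  assumes "affine_form n f" shows "f (\<lambda>l. y l + t * d l) = f y + t * linear_part f d"
proof -
  obtain c b where f: "\<And>y. f y = (\<Sum>l<n. c l * y l) + b" using assms by (auto simp: affine_form_def)
  show ?thesis by (simp add: linear_part_def f algebra_simps sum.distrib sum_distrib_left)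
qed

lemma affine_form_lipschitz:
  assumes "affine_form n f"
  shows "\<exists>L\<ge>0. \<forall>y z e. (\<forall>l. \<bar>z l - y l\<bar> \<le> e) \<longrightarrow> \<bar>f z - f y\<bar> \<le> L * e"
proof -
  obtain c b where f: "\<And>y. f y = (\<Sum>l<n. c l * y l) + b" using assms by (auto simp: affine_form_def)
  have "\<bar>f z - f y\<bar> \<le> (\<Sum>l<n. \<bar>c l\<bar>) * e" if h: "\<forall>l. \<bar>z l - y l\<bar> \<le> e" for y z e
  proof -
    have "\<bar>f z - f y\<bar> = \<bar>\<Sum>l<n. c l * (z l - y l)\<bar>"
      by (simp add: f algebra_simps sum_subtractf)
    also have "\<dots> \<le> (\<Sum>l<n. \<bar>c l\<bar> * e)"
      by (rule order_trans[OF sum_abs sum_mono]) (simp add: abs_mult h mult_left_mono)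
    finally show ?thesis by (simp add: sum_distrib_right)
  qed
  then show ?thesis by (intro exI[of _ "\<Sum>l<n. \<bar>c l\<bar>"]) (auto simp: sum_nonneg)
qed

lemma sgn_add_small:
  fixes a x :: real assumes "\<bar>x\<bar> < \<bar>a\<bar>" shows "sgn (a + x) = sgn a"
  using assms by (auto simp: sgn_if abs_if split: if_splits)

lemma affine_form_sgn_stable:
  assumes "affine_form n f" "f q \<noteq> 0"
  shows "\<exists>e>0. \<forall>y. (\<forall>l. \<bar>y l - q l\<bar> < e) \<longrightarrow> sgn (f y) = sgn (f q)"
proof -
  obtain L where L: "L \<ge> 0" "\<And>y z e. \<forall>l. \<bar>z l - y l\<bar> \<le> e \<Longrightarrow> \<bar>f z - f y\<bar> \<le> L * e"
    using affine_form_lipschitz[OF assms(1)] by blast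
  define e where "e = \<bar>f q\<bar> / (L + 1)"
  have e: "e > 0" "L * e < \<bar>f q\<bar>"
    using assms(2) L(1) by (simp_all add: e_def field_simps)
  have "sgn (f y) = sgn (f q)" if "\<forall>l. \<bar>y l - q l\<bar> < e" for y
  proof -
    have "\<forall>l. \<bar>y l - q l\<bar> \<le> e" using that by (simp add: less_imp_le)
    then have "\<bar>f y - f q\<bar> < \<bar>f q\<bar>" using L(2) e(2) order_le_less_trans by blast
    then show ?thesis using sgn_add_small[of "f y - f q" "f q"] by simp
  qed
  then show ?thesis using e(1) by blast
qed

lemma affine_forms_sgn_stable:
  assumes "finite Z" "\<And>z. z \<in> Z \<Longrightarrow> affine_form n (f z)" "\<And>z. z \<in> Z \<Longrightarrow> f z q \<noteq> 0"
  shows "\<exists>e>0. \<forall>y. (\<forall>l. \<bar>y l - q l\<bar> < e) \<longrightarrow> (\<forall>z\<in>Z. sgn (f z y) = sgn (f z q))"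
  using assms
proof (induction Z rule: finite_induct)
  case empty
  show ?case by (rule exI[of _ 1]) simp
next
  case (insert z Z)
  obtain e1 where e1: "e1 > 0" "\<forall>y. (\<forall>l. \<bar>y l - q l\<bar> < e1) \<longrightarrow> (\<forall>z\<in>Z. sgn (f z y) = sgn (f z q))"
    using insert by auto
  obtain e2 where e2: "e2 > 0" "\<forall>y. (\<forall>l. \<bar>y l - q l\<bar> < e2) \<longrightarrow> sgn (f z y) = sgn (f z q)"
    using affine_form_sgn_stable[of n "f z" q] insert.prems by auto
  show ?case
  proof (intro exI[of _ "min e1 e2"] conjI allI impI)
    show "min e1 e2 > 0" using e1 e2 by simp
    fix y assume "\<forall>l. \<bar>y l - q l\<bar> < min e1 e2"
    then have "\<forall>l. \<bar>y l - q l\<bar> < e1" "\<forall>l. \<bar>y l - q l\<bar> < e2" by auto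
    then show "\<forall>z'\<in>insert z Z. sgn (f z' y) = sgn (f z' q)" using e1(2) e2(2) by blast
  qed
qed

lemma eventually_sgn_eq:
  fixes f :: "'a \<Rightarrow> real"
  assumes "(f \<longlongrightarrow> l) F" "l \<noteq> 0"
  shows "eventually (\<lambda>x. sgn (f x) = sgn l) F"
proof (cases "l > 0")
  case True
  then show ?thesis by (rule eventually_mono[OF order_tendstoD(1)[OF assms(1)]]) (use True in simp)
next
  case False
  then have "l < 0" using assms(2) by simp
  then show ?thesis by (rule eventually_mono[OF order_tendstoD(2)[OF assms(1)]]) (use \<open>l < 0\<close> in simp)
qed

lemma sgn_stable_on_line:
  fixes a b :: "'z \<Rightarrow> real"
  assumes "finite Z" "\<And>z. z \<in> Z \<Longrightarrow> a z \<noteq> 0"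
  shows "\<exists>t>0. \<forall>z\<in>Z. sgn (a z + t * b z) = sgn (a z)"
proof -
  have "eventually (\<lambda>t. \<forall>z\<in>Z. sgn (a z + t * b z) = sgn (a z)) (at_right 0)"
  proof (rule eventually_ball_finite[OF assms(1)], intro ballI)
    fix z assume "z \<in> Z"
    have "((\<lambda>t. a z + t * b z) \<longlongrightarrow> a z) (at_right 0)"
      by (auto intro!: tendsto_eq_intros)
    then show "eventually (\<lambda>t. sgn (a z + t * b z) = sgn (a z)) (at_right 0)"
      using assms(2)[OF \<open>z \<in> Z\<close>] by (rule eventually_sgn_eq)
  qed
  then obtain t0 where "t0 > 0" "\<And>t. 0 < t \<Longrightarrow> t < t0 \<Longrightarrow> \<forall>z\<in>Z. sgn (a z + t * b z) = sgn (a z)"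
    by (auto simp: eventually_at_right_field)
  moreover have "0 < t0 / 2" "t0 / 2 < t0" using \<open>t0 > 0\<close> by simp_all
  ultimately show ?thesis by blast
qed

definition int_sgn :: "real \<Rightarrow> int" where
  "int_sgn v = (if v > 0 then 1 else if v < 0 then -1 else 0)"

definition sign_pattern :: "(nat \<Rightarrow> nat \<Rightarrow> int) \<Rightarrow> bool" where
  "sign_pattern \<sigma> \<longleftrightarrow> (\<forall>e j. \<sigma> e j \<in> {-1, 0, 1})"

lemma sign_ok_int_sgn: "sign_ok (int_sgn v) v"
  by (simp add: int_sgn_def sign_ok_def)

lemma sign_pattern_int_sgn: "sign_pattern (\<lambda>e j. int_sgn (f e j))"
  by (simp add: sign_pattern_def int_sgn_def)

lemma sign_ok_0: "sign_ok s 0"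
  by (simp add: sign_ok_def)

lemma sign_ok_int_sgn_0: "sign_ok (int_sgn 0) w \<longleftrightarrow> w = 0"
  by (simp add: int_sgn_def sign_ok_def)

lemma sign_ok_sgn_cong: "sign_ok s v \<Longrightarrow> sgn w = sgn v \<Longrightarrow> sign_ok s w"
  by (auto simp: sign_ok_def sgn_if zero_le_mult_iff split: if_splits)

lemma sign_ok_int_sgn_trans:
  "sign_ok (int_sgn v) w \<Longrightarrow> sign_ok s v \<Longrightarrow> s \<in> {-1, 0, 1} \<Longrightarrow> sign_ok s w"
  by (auto simp: sign_ok_def int_sgn_def split: if_splits)

lemma sign_ok_mult_nonneg: "sign_ok s p \<Longrightarrow> c \<ge> 0 \<Longrightarrow> sign_ok s (p * c)"
  by (auto simp: sign_ok_def mult.assoc[symmetric] zero_le_mult_iff)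

lemma sign_ok_same_sgn:
  "s \<in> {-1, 0, 1} \<Longrightarrow> sign_ok s v \<Longrightarrow> sign_ok s w \<Longrightarrow> v \<noteq> 0 \<Longrightarrow> w \<noteq> 0 \<Longrightarrow> sgn v = sgn w"
  by (auto simp: sign_ok_def zero_le_mult_iff sgn_if)

lemma sign_ok_segment_zero:
  assumes "sign_ok s p" "sign_ok s q" "0 < t" "t < 1" "(1 - t) * p + t * q = 0"
  shows "p = 0 \<and> q = 0"
proof (cases "s = 0")
  case True
  then show ?thesis using assms(1,2) by (simp add: sign_ok_def)
next
  case False
  then have "0 \<le> (1 - t) * (real_of_int s * p)" "0 \<le> t * (real_of_int s * q)"
    using assms(1-4) by (simp_all add: sign_ok_def)
  moreover have "(1 - t) * (real_of_int s * p) + t * (real_of_int s * q) = 0"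
    using arg_cong[OF assms(5), of "\<lambda>x. real_of_int s * x"] by (simp add: algebra_simps)
  ultimately show ?thesis using False assms(3,4) by (simp add: add_nonneg_eq_0_iff)
qed

lemma sign_ok_sum:
  assumes "finite T" "\<And>t. t \<in> T \<Longrightarrow> sign_ok s (v t)" "\<And>t. t \<in> T \<Longrightarrow> c t \<ge> 0"
  shows "sign_ok s (\<Sum>t\<in>T. c t * v t)"
proof (cases "s = 0")
  case True then show ?thesis using assms by (simp add: sign_ok_def)
next
  case False
  have "0 \<le> (\<Sum>t\<in>T. c t * (real_of_int s * v t))"
    using assms False by (intro sum_nonneg) (simp add: sign_ok_def)
  then show ?thesis using False by (simp add: sign_ok_def sum_distrib_left mult.left_commute)
qed

lemma sign_ok_sum_nonzero:
  assumes "finite T" "s \<in> {-1, 1}" "\<And>t. t \<in> T \<Longrightarrow> sign_ok s (v t)" "\<And>t. t \<in> T \<Longrightarrow> c t > 0"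
    "t0 \<in> T" "v t0 \<noteq> 0"
  shows "(\<Sum>t\<in>T. c t * v t) \<noteq> 0"
proof -
  have nonneg: "0 \<le> c t * (real_of_int s * v t)" if "t \<in> T" for t
    using assms(2) assms(3)[OF that] assms(4)[OF that] by (auto simp: sign_ok_def mult_nonneg_nonpos less_imp_le)
  have "0 \<le> real_of_int s * v t0" "real_of_int s * v t0 \<noteq> 0"
    using assms(2,6) assms(3)[OF assms(5)] by (auto simp: sign_ok_def)
  then have "0 < c t0 * (real_of_int s * v t0)"
    using assms(4)[OF assms(5)] by (simp add: mult_pos_pos order_le_neq_trans)
  also have "\<dots> \<le> (\<Sum>t\<in>T. c t * (real_of_int s * v t))"
    by (rule member_le_sum) (use assms(1,5) nonneg in auto)
  finally have "0 < real_of_int s * (\<Sum>t\<in>T. c t * v t)"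
    by (simp add: sum_distrib_left mult.left_commute)
  then show ?thesis by auto
qed

lemma sum_vect_apply: "(sum g A :: vect) l = (\<Sum>x\<in>A. g x l)"
  by (induction A rule: infinite_finite_induct) auto

lemma fscale_apply: "fscale c x l = c * x l"
  by (simp add: fscale_def)

lemma Rn_diff: "x \<in> Rn n \<Longrightarrow> y \<in> Rn n \<Longrightarrow> x - y \<in> Rn n"
  by (simp add: Rn_def)

lemma Rn_add: "x \<in> Rn n \<Longrightarrow> y \<in> Rn n \<Longrightarrow> x + y \<in> Rn n"
  by (simp add: Rn_def)

lemma subspace_Rn: "fv.subspace (Rn n)"
  unfolding fv.subspace_def Rn_def by (auto simp: fscale_apply)

lemma subset_faff: "S \<subseteq> faff S"
proof
  fix x assume "x \<in> S"
  then show "x \<in> faff S" unfolding faff_def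
    by (intro CollectI exI[of _ "{x}"] exI[of _ "\<lambda>t. 1"]) (auto simp: affine_comb_def)
qed

lemma faff_subset_Rn: "S \<subseteq> Rn n \<Longrightarrow> faff S \<subseteq> Rn n"
  by (auto simp: faff_def affine_comb_def Rn_def subset_eq intro!: sum.neutral)

definition unit_vect :: "nat \<Rightarrow> vect" where
  "unit_vect l = (\<lambda>i. if i = l then 1 else 0)"

lemma inj_unit_vect: "inj unit_vect"
  by (rule injI) (metis unit_vect_def zero_neq_one)

lemma card_unit_vects: "card (unit_vect ` {..<n}) = n"
  by (simp add: card_image inj_on_subset[OF inj_unit_vect])

lemma span_unit_vects: "fv.span (unit_vect ` {..<n}) = Rn n"
proof
  show "fv.span (unit_vect ` {..<n}) \<subseteq> Rn n"
    by (rule fv.span_minimal[OF _ subspace_Rn]) (auto simp: Rn_def unit_vect_def)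
  show "Rn n \<subseteq> fv.span (unit_vect ` {..<n})"
  proof
    fix y assume y: "y \<in> Rn n"
    have "y = (\<Sum>l<n. fscale (y l) (unit_vect l))"
    proof
      fix i
      have "(\<Sum>l<n. fscale (y l) (unit_vect l)) i = (\<Sum>l<n. if l = i then y l else 0)"
        by (simp add: sum_vect_apply unit_vect_def fscale_apply if_distrib cong: if_cong)
      then show "y i = (\<Sum>l<n. fscale (y l) (unit_vect l)) i" using y by (auto simp: Rn_def)
    qed
    also have "\<dots> \<in> fv.span (unit_vect ` {..<n})"
      by (intro fv.span_sum fv.span_scale fv.span_base) auto
    finally show "y \<in> fv.span (unit_vect ` {..<n})" .
  qed
qed

lemma independent_unit_vects: "fv.independent (unit_vect ` {..<n})"
proof (rule fv.independent_if_scalars_zero)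
  fix f x assume s: "(\<Sum>x\<in>unit_vect ` {..<n}. fscale (f x) x) = 0" and x: "x \<in> unit_vect ` {..<n}"
  then obtain l where l: "l < n" "x = unit_vect l" by auto
  have "0 = (\<Sum>x\<in>unit_vect ` {..<n}. fscale (f x) x) l" using s by simp
  also have "\<dots> = (\<Sum>m<n. f (unit_vect m) * unit_vect m l)"
    by (simp add: sum_vect_apply fscale_apply sum.reindex[OF inj_on_subset[OF inj_unit_vect]])
  also have "\<dots> = (\<Sum>m<n. if m = l then f (unit_vect m) else 0)"
    by (rule sum.cong) (auto simp: unit_vect_def)
  finally show "f x = 0" using l by simp
qed simp

lemma dim_Rn [simp]: "fdim (Rn n) = n"
proof -
  have "unit_vect ` {..<n} \<subseteq> Rn n" by (auto simp: Rn_def unit_vect_def)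
  then show ?thesis
    using fv.basis_card_eq_dim[of "unit_vect ` {..<n}" "Rn n"] span_unit_vects[of n]
      independent_unit_vects[of n] card_unit_vects[of n]
    by simp
qed

lemma independent_in_Rn:
  assumes "B \<subseteq> Rn n" "fv.independent B"
  shows "finite B" "card B \<le> n"
  using fv.independent_span_bound[of "unit_vect ` {..<n}" B] assms
  by (simp_all add: span_unit_vects card_unit_vects)

lemma basis_in_Rn:
  assumes "S \<subseteq> Rn n"
  obtains B where "B \<subseteq> S" "fv.independent B" "S \<subseteq> fv.span B" "card B = fdim S" "finite B"
proof -
  obtain B where B: "B \<subseteq> S" "fv.independent B" "S \<subseteq> fv.span B" "card B = fdim S"
    by (rule fv.basis_exists)
  moreover have "finite B" using B(1,2) assms independent_in_Rn by blast
  ultimately show ?thesis using that by blast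
qed

lemma dim_le_dim_of_span:
  assumes "S \<subseteq> fv.span T" "T \<subseteq> Rn n"
  shows "fdim S \<le> fdim T"
proof -
  obtain B where B: "B \<subseteq> T" "fv.independent B" "T \<subseteq> fv.span B" "card B = fdim T" "finite B"
    using assms(2) by (rule basis_in_Rn)
  have "S \<subseteq> fv.span B"
    using assms(1) fv.span_minimal[OF B(3) fv.subspace_span] by blast
  then show ?thesis using fv.dim_le_card[OF _ B(5)] B(4) by simp
qed

lemma dim_le_dim_kernel_Suc:
  assumes V: "fv.subspace V" "V \<subseteq> Rn n"
    and L: "\<And>x y. L (x + y) = L x + L y" "\<And>c x. L (fscale c x) = c * L x"
  shows "fdim V \<le> fdim {v\<in>V. L v = 0} + 1"
proof (cases "\<forall>v\<in>V. L v = 0")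
  case True
  then have "{v\<in>V. L v = 0} = V" by auto
  then show ?thesis by simp
next
  case False
  then obtain b where b: "b \<in> V" "L b \<noteq> 0" by auto
  have "{v\<in>V. L v = 0} \<subseteq> Rn n" using V(2) by blast
  then obtain B where B: "B \<subseteq> {v\<in>V. L v = 0}" "fv.independent B" "{v\<in>V. L v = 0} \<subseteq> fv.span B"
      "card B = fdim {v\<in>V. L v = 0}" "finite B"
    by (rule basis_in_Rn)
  have L_diff: "L (x - y) = L x - L y" for x y
    using L(1)[of "x - y" y] by simp
  have "V \<subseteq> fv.span (insert b B)"
  proof
    fix v assume v: "v \<in> V"
    define w where "w = v - fscale (L v / L b) b"
    have "w \<in> V" unfolding w_def using V(1) v b(1) by (intro fv.subspace_diff fv.subspace_scale)
    moreover have "L w = 0" unfolding w_def using b(2) by (simp add: L_diff L(2))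
    ultimately have "w \<in> fv.span (insert b B)" using B(3) fv.span_mono[of B "insert b B"] by auto
    moreover have "fscale (L v / L b) b \<in> fv.span (insert b B)"
      by (intro fv.span_scale fv.span_base) simp
    ultimately have "w + fscale (L v / L b) b \<in> fv.span (insert b B)" by (rule fv.span_add)
    then show "v \<in> fv.span (insert b B)" by (simp add: w_def)
  qed
  then have "fdim V \<le> card (insert b B)" by (rule fv.dim_le_card) (simp add: B(5))
  also have "\<dots> \<le> card B + 1" by (simp add: B(5) card_insert_if)
  finally show ?thesis using B(4) by simp
qed

lemma image_subset_span_extension:
  assumes hom: "module_hom fscale fscale M" and V: "V \<subseteq> fv.span B"
    and B': "B' \<subseteq> B" "M ` B' \<subseteq> fv.span W"
  shows "M ` V \<subseteq> fv.span (M ` (B - B') \<union> W)"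
proof -
  have "M ` B \<subseteq> fv.span (M ` (B - B') \<union> W)"
  proof
    fix x assume "x \<in> M ` B"
    then obtain b where b: "b \<in> B" "x = M b" by auto
    show "x \<in> fv.span (M ` (B - B') \<union> W)"
    proof (cases "b \<in> B'")
      case True
      then show ?thesis using b B'(2) fv.span_mono[of W "M ` (B - B') \<union> W"] by auto
    qed (use b in \<open>auto intro: fv.span_base\<close>)
  qed
  then show ?thesis
    using module_hom.spans_image[OF hom V] fv.span_minimal[OF _ fv.subspace_span] by blast
qed

lemma dim_transversal_preimage:
  assumes V: "V \<subseteq> Rn n'" and W: "W \<subseteq> Rn n" and hom: "module_hom fscale fscale M"
    and spans: "Rn n \<subseteq> fv.span (M ` V \<union> W)"
  shows "fdim {d\<in>V. M d \<in> fv.span W} + n \<le> fdim V + fdim W"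
proof -
  define U where "U = {d\<in>V. M d \<in> fv.span W}"
  have "U \<subseteq> Rn n'" using V by (auto simp: U_def)
  then obtain BU where BU: "BU \<subseteq> U" "fv.independent BU" "U \<subseteq> fv.span BU" "card BU = fdim U" "finite BU"
    by (rule basis_in_Rn)
  obtain BV where BV: "BU \<subseteq> BV" "BV \<subseteq> V" "fv.independent BV" "V \<subseteq> fv.span BV"
    using fv.maximal_independent_subset_extend[of BU V] BU(1,2) by (auto simp: U_def)
  have BV_fin: "finite BV" and BV_card: "card BV = fdim V"
    using independent_in_Rn[of BV n'] fv.basis_card_eq_dim[OF BV(2,4,3)] BV V by auto
  obtain BW where BW: "BW \<subseteq> W" "fv.independent BW" "W \<subseteq> fv.span BW" "card BW = fdim W" "finite BW"
    using W by (rule basis_in_Rn)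
  have "M ` BU \<subseteq> fv.span BW"
    using BU(1) fv.span_minimal[OF BW(3) fv.subspace_span] by (auto simp: U_def)
  then have "M ` V \<subseteq> fv.span (M ` (BV - BU) \<union> BW)"
    by (rule image_subset_span_extension[OF hom BV(4,1)])
  moreover have "W \<subseteq> fv.span (M ` (BV - BU) \<union> BW)"
    using BW(3) fv.span_mono[of BW "M ` (BV - BU) \<union> BW"] by auto
  ultimately have "Rn n \<subseteq> fv.span (M ` (BV - BU) \<union> BW)"
    using spans fv.span_minimal[OF _ fv.subspace_span, of "M ` V \<union> W"] by blast
  then have "n \<le> card (M ` (BV - BU) \<union> BW)"
    using fv.dim_le_card[of "Rn n" "M ` (BV - BU) \<union> BW"] BV_fin BW(5) by simp
  also have "\<dots> \<le> card (BV - BU) + card BW"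
    using card_Un_le[of "M ` (BV - BU)" BW] card_image_le[of "BV - BU" M] BV_fin by simp
  also have "card (BV - BU) = card BV - card BU"
    using BV(1) BV_fin by (simp add: card_Diff_subset finite_subset)
  finally show ?thesis
    using BU(4) BV_card BW(4) card_mono[OF BV_fin BV(1)] by (simp add: U_def)
qed

subsection \<open>Pre-activations and sign cells\<close>

text \<open>\<open>preact N a e\<close> is \<open>A_{a+e} \<circ> F_{a+e-1} \<circ> \<dots> \<circ> F_a\<close>, the pre-activation of layer \<open>a + e\<close>
  as a function of the input of layer \<open>a\<close>.\<close>

primrec preact :: "net \<Rightarrow> nat \<Rightarrow> nat \<Rightarrow> vect \<Rightarrow> vect" where
  "preact N a 0 y = aff_layer N a y"
| "preact N a (Suc e) y = aff_layer N (a + e + 1) (relu_v (preact N a e y))"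

lemma aff_layer_beyond: "dims N i \<le> j \<Longrightarrow> aff_layer N i x j = 0"
  by (simp add: aff_layer_def)

lemma preact_beyond: "dims N (a + e) \<le> j \<Longrightarrow> preact N a e y j = 0"
  by (cases e) (simp_all add: aff_layer_def)

lemma aff_layer_in_Rn: "aff_layer N i x \<in> Rn (dims N i)"
  by (simp add: Rn_def aff_layer_def)

lemma relu_v_in_Rn: "x \<in> Rn n \<Longrightarrow> relu_v x \<in> Rn n"
  by (simp add: Rn_def relu_v_def)

lemma preact_in_Rn: "preact N a e y \<in> Rn (dims N (a + e))"
  by (cases e) (simp_all add: aff_layer_in_Rn)

lemma preact_Suc_shift: "preact N a (Suc e) y = preact N (Suc a) e (relu_v (aff_layer N a y))"
  by (induction e) simp_all

lemma comp_eq_relu_preact: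
  assumes "1 \<le> a" "a + e \<le> depth N"
  shows "comp N a (a + e) y = relu_v (preact N a e y)"
  using assms(2)
proof (induction e)
  case 0
  have "comp N a (a - 1) = id" using assms(1) by (cases "a - 1") auto
  moreover have "comp N a a = layer N a \<circ> comp N a (a - 1)" using assms(1) by (cases a) auto
  ultimately show ?case using 0 by (simp add: layer_def)
next
  case (Suc e)
  then show ?case by (simp add: layer_def)
qed

lemma node_eq_preact:
  assumes "1 \<le> i" "i \<le> depth N + 1"
  shows "node N i j y = preact N 1 (i - 1) y j"
proof (cases "i - 1")
  case 0
  then show ?thesis using assms by (simp add: node_def)
next
  case (Suc e)
  then have "comp N 1 (1 + e) y = relu_v (preact N 1 e y)"
    using assms by (intro comp_eq_relu_preact) auto
  moreover have "i = Suc (Suc e)" using Suc assms by simp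
  ultimately show ?thesis by (simp add: node_def)
qed

definition sign_cell :: "net \<Rightarrow> nat \<Rightarrow> nat \<Rightarrow> (nat \<Rightarrow> nat \<Rightarrow> int) \<Rightarrow> vect set" where
  "sign_cell N a d \<sigma> = {y \<in> Rn (dims N (a - 1)).
     \<forall>e\<le>d. \<forall>j<dims N (a + e). sign_ok (\<sigma> e j) (preact N a e y j)}"

lemma sign_cell_subset_Rn: "sign_cell N a d \<sigma> \<subseteq> Rn (dims N (a - 1))"
  by (auto simp: sign_cell_def)

lemma sign_cell_0:
  "sign_cell N a 0 \<sigma> = {y \<in> Rn (dims N (a - 1)). \<forall>j<dims N a. sign_ok (\<sigma> 0 j) (aff_layer N a y j)}"
  by (auto simp: sign_cell_def)

lemma sign_cell_Suc:
  assumes "1 \<le> a" "a + d \<le> depth N"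
  shows "sign_cell N a (Suc d) \<sigma> = sign_cell N a d \<sigma> \<inter> comp N a (a + d) -`
    {y \<in> Rn (dims N (a + d)). \<forall>j<dims N (a + d + 1). sign_ok (\<sigma> (Suc d) j) (aff_layer N (a + d + 1) y j)}"
  using comp_eq_relu_preact[OF assms] relu_v_in_Rn[OF preact_in_Rn]
  by (auto simp: sign_cell_def le_Suc_eq)

lemma canon_nonempty: "C \<in> canon N a d \<Longrightarrow> C \<noteq> {}"
  by (cases d) (auto simp: hyp_cells_def)

lemma canon_imp_sign_cell:
  assumes "1 \<le> a" "a + d \<le> depth N + 1" "C \<in> canon N a d"
  obtains \<sigma> where "sign_pattern \<sigma>" "C = sign_cell N a d \<sigma>"
  using assms(2,3)
proof (induction d arbitrary: C thesis)
  case 0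
  then obtain \<tau> where "\<forall>j. \<tau> j \<in> {-1, 0, 1}"
    "C = {y \<in> Rn (dims N (a - 1)). \<forall>j<dims N a. sign_ok (\<tau> j) (aff_layer N a y j)}"
    by (auto simp: hyp_cells_def)
  then show ?case using 0(1)[of "\<lambda>e j. \<tau> j"] by (simp add: sign_pattern_def sign_cell_0)
next
  case (Suc d)
  then obtain C' R where CR: "C' \<in> canon N a d" "R \<in> hyp_cells N (a + d + 1)"
    "C = C' \<inter> comp N a (a + d) -` R" by auto
  obtain \<sigma> where \<sigma>: "sign_pattern \<sigma>" "C' = sign_cell N a d \<sigma>"
    using Suc.IH[OF _ _ CR(1)] Suc.prems(2) by auto
  obtain \<tau> where \<tau>: "\<forall>j. \<tau> j \<in> {-1, 0, 1}" "R = {y \<in> Rn (dims N (a + d)).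
      \<forall>j<dims N (a + d + 1). sign_ok (\<tau> j) (aff_layer N (a + d + 1) y j)}"
    using CR(2) by (auto simp: hyp_cells_def)
  have "C = sign_cell N a (Suc d) (\<sigma>(Suc d := \<tau>))"
    using sign_cell_Suc[of a d N "\<sigma>(Suc d := \<tau>)"] assms(1) Suc.prems(2) CR(3) \<sigma>(2) \<tau>(2)
    by (simp add: sign_cell_def)
  moreover have "sign_pattern (\<sigma>(Suc d := \<tau>))" using \<sigma>(1) \<tau>(1) by (auto simp: sign_pattern_def)
  ultimately show ?case using Suc.prems(1) by blast
qed

lemma sign_cell_in_canon:
  assumes "1 \<le> a" "a + d \<le> depth N + 1" "sign_pattern \<sigma>" "sign_cell N a d \<sigma> \<noteq> {}"
  shows "sign_cell N a d \<sigma> \<in> canon N a d"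
  using assms(2,4)
proof (induction d)
  case 0
  then show ?case using assms(3) unfolding hyp_cells_def canon.simps sign_cell_0 sign_pattern_def
    by blast
next
  case (Suc d)
  let ?R = "{y \<in> Rn (dims N (a + d)).
    \<forall>j<dims N (a + d + 1). sign_ok (\<sigma> (Suc d) j) (aff_layer N (a + d + 1) y j)}"
  have eq: "sign_cell N a (Suc d) \<sigma> = sign_cell N a d \<sigma> \<inter> comp N a (a + d) -` ?R"
    using assms(1) Suc.prems(1) by (intro sign_cell_Suc) auto
  have "sign_cell N a d \<sigma> \<noteq> {}" using Suc.prems(2) eq by auto
  then have "sign_cell N a d \<sigma> \<in> canon N a d" using Suc.IH Suc.prems(1) by simp
  moreover have "?R \<in> hyp_cells N (a + d + 1)"
  proof -
    have "?R \<noteq> {}" using Suc.prems(2) eq by auto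
    moreover have "\<forall>j. \<sigma> (Suc d) j \<in> {-1, 0, 1}" using assms(3) by (simp add: sign_pattern_def)
    ultimately show ?thesis
      unfolding hyp_cells_def mem_Collect_eq by (intro conjI exI[of _ "\<sigma> (Suc d)"]) simp_all
  qed
  ultimately show ?case using eq Suc.prems(2) unfolding canon.simps by blast
qed

text \<open>On a sign cell the ReLUs act as fixed coordinate masks, so there the pre-activations
  agree with the affine maps obtained by replacing each ReLU by its mask.\<close>

primrec masked_preact :: "net \<Rightarrow> nat \<Rightarrow> (nat \<Rightarrow> nat \<Rightarrow> bool) \<Rightarrow> nat \<Rightarrow> vect \<Rightarrow> vect" where
  "masked_preact N a \<mu> 0 y = aff_layer N a y"
| "masked_preact N a \<mu> (Suc e) y =
     aff_layer N (a + e + 1) (\<lambda>l. if \<mu> e l then masked_preact N a \<mu> e y l else 0)"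

definition active_mask :: "(nat \<Rightarrow> nat \<Rightarrow> int) \<Rightarrow> nat \<Rightarrow> nat \<Rightarrow> bool" where
  "active_mask \<sigma> e l \<longleftrightarrow> \<sigma> e l = 1"

lemma masked_preact_beyond: "dims N (a + e) \<le> j \<Longrightarrow> masked_preact N a \<mu> e y j = 0"
  by (cases e) (simp_all add: aff_layer_def)

lemma affine_form_aff_layer:
  assumes "\<And>l. l < dims N (i - 1) \<Longrightarrow> affine_form n (\<lambda>y. x y l)"
  shows "affine_form n (\<lambda>y. aff_layer N i (x y) j)"
proof (cases "j < dims N i")
  case True
  have "affine_form n (\<lambda>y. (\<Sum>l<dims N (i - 1). wt N i j l * x y l) + bs N i j)"
    by (intro affine_form_add affine_form_sum affine_form_cmult affine_form_const assms) auto
  then show ?thesis using True by (simp add: aff_layer_def)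
next
  case False
  then show ?thesis by (simp add: aff_layer_def affine_form_const)
qed

lemma affine_form_masked_preact: "affine_form (dims N (a - 1)) (\<lambda>y. masked_preact N a \<mu> e y j)"
proof (induction e arbitrary: j)
  case 0
  show ?case by (simp, rule affine_form_aff_layer, rule affine_form_coord) simp
next
  case (Suc e)
  show ?case
    unfolding masked_preact.simps
  proof (rule affine_form_aff_layer)
    fix l
    show "affine_form (dims N (a - 1)) (\<lambda>y. if \<mu> e l then masked_preact N a \<mu> e y l else 0)"
      using Suc.IH[of l] by (cases "\<mu> e l") (simp_all add: affine_form_const)
  qed
qed

lemma relu_v_eq_mask:
  assumes "sign_pattern \<sigma>" "\<forall>j<dims N (a + e). sign_ok (\<sigma> e j) (v j)"
    "\<forall>j. dims N (a + e) \<le> j \<longrightarrow> v j = 0"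
  shows "relu_v v = (\<lambda>l. if active_mask \<sigma> e l then v l else 0)"
proof
  fix l
  show "relu_v v l = (if active_mask \<sigma> e l then v l else 0)"
  proof (cases "l < dims N (a + e)")
    case True
    then have "sign_ok (\<sigma> e l) (v l)" "\<sigma> e l \<in> {-1, 0, 1}"
      using assms(1,2) by (auto simp: sign_pattern_def)
    then show ?thesis by (auto simp: relu_v_def active_mask_def sign_ok_def)
  next
    case False
    then show ?thesis using assms(3) by (auto simp: relu_v_def)
  qed
qed

lemma preact_eq_masked_preact:
  assumes "sign_pattern \<sigma>" "\<forall>e<d. \<forall>j<dims N (a + e). sign_ok (\<sigma> e j) (preact N a e y j)"
  shows "preact N a d y = masked_preact N a (active_mask \<sigma>) d y"
  using assms(2)
proof (induction d)
  case (Suc d)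
  then have IH: "preact N a d y = masked_preact N a (active_mask \<sigma>) d y" by simp
  have "relu_v (preact N a d y) = (\<lambda>l. if active_mask \<sigma> d l then preact N a d y l else 0)"
    by (rule relu_v_eq_mask[OF assms(1)]) (use Suc.prems preact_beyond in auto)
  then show ?case by (simp only: preact.simps masked_preact.simps IH)
qed simp

lemma preact_eq_masked_preact':
  assumes "sign_pattern \<sigma>"
    "\<forall>e<d. \<forall>j<dims N (a + e). sign_ok (\<sigma> e j) (masked_preact N a (active_mask \<sigma>) e y j)"
  shows "preact N a d y = masked_preact N a (active_mask \<sigma>) d y"
  using assms(2)
proof (induction d)
  case (Suc d)
  then have IH: "preact N a d y = masked_preact N a (active_mask \<sigma>) d y" by simp
  have "relu_v (preact N a d y) = (\<lambda>l. if active_mask \<sigma> d l then preact N a d y l else 0)"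
    by (rule relu_v_eq_mask[OF assms(1)]) (use Suc.prems IH masked_preact_beyond in auto)
  then show ?case by (simp only: preact.simps masked_preact.simps IH)
qed simp

lemma preact_eq_masked_preact_on_sign_cell:
  assumes "sign_pattern \<sigma>" "z \<in> sign_cell N a d \<sigma>" "e \<le> Suc d"
  shows "preact N a e z = masked_preact N a (active_mask \<sigma>) e z"
  using assms by (intro preact_eq_masked_preact) (auto simp: sign_cell_def)

lemma sign_cellI_masked:
  assumes "sign_pattern \<sigma>" "y \<in> Rn (dims N (a - 1))"
    "\<forall>e\<le>d. \<forall>j<dims N (a + e). sign_ok (\<sigma> e j) (masked_preact N a (active_mask \<sigma>) e y j)"
  shows "y \<in> sign_cell N a d \<sigma>"
proof -
  have "preact N a e y = masked_preact N a (active_mask \<sigma>) e y" if "e \<le> d" for e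
    using assms(3) that by (intro preact_eq_masked_preact'[OF assms(1)]) auto
  then show ?thesis using assms(2,3) by (simp add: sign_cell_def)
qed

definition layer_nodes :: "net \<Rightarrow> nat \<Rightarrow> nat \<Rightarrow> (nat \<times> nat) set" where
  "layer_nodes N a d = (SIGMA e:{..d}. {..<dims N (a + e)})"

lemma finite_layer_nodes [simp]: "finite (layer_nodes N a d)"
  by (simp add: layer_nodes_def)

lemma mem_layer_nodes [simp]: "(e, j) \<in> layer_nodes N a d \<longleftrightarrow> e \<le> d \<and> j < dims N (a + e)"
  by (simp add: layer_nodes_def)

text \<open>The signs of the nodes not vanishing at \<open>q\<close> are locally constant around \<open>q\<close>.\<close>

lemma sign_cell_frelintI:
  assumes \<sigma>: "sign_pattern \<sigma>" and q: "q \<in> sign_cell N a d \<sigma>"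
    and zeros: "\<And>e j. e \<le> d \<Longrightarrow> j < dims N (a + e) \<Longrightarrow> preact N a e q j = 0 \<Longrightarrow>
      \<forall>z\<in>sign_cell N a d \<sigma>. preact N a e z j = 0"
  shows "q \<in> frelint (sign_cell N a d \<sigma>)"
proof -
  let ?S = "sign_cell N a d \<sigma>"
  let ?M = "masked_preact N a (active_mask \<sigma>)"
  have M_eq: "preact N a e z = ?M e z" if "z \<in> ?S" "e \<le> d" for e z
    using preact_eq_masked_preact_on_sign_cell[OF \<sigma> that(1)] that(2) by simp
  define F where "F z y = ?M (fst z) y (snd z)" for z y
  define NZ where "NZ = {z \<in> layer_nodes N a d. preact N a (fst z) q (snd z) \<noteq> 0}"
  have "finite NZ" by (simp add: NZ_def)
  moreover have "affine_form (dims N (a - 1)) (F z)" for z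
    unfolding F_def by (rule affine_form_masked_preact)
  moreover have "F z q \<noteq> 0" if "z \<in> NZ" for z
    using that M_eq[OF q, of "fst z"] by (auto simp: NZ_def F_def layer_nodes_def)
  ultimately obtain \<epsilon> where \<epsilon>: "\<epsilon> > 0"
    "\<forall>y. (\<forall>l. \<bar>y l - q l\<bar> < \<epsilon>) \<longrightarrow> (\<forall>z\<in>NZ. sgn (F z y) = sgn (F z q))"
    using affine_forms_sgn_stable[of NZ "dims N (a - 1)" F q] by blast
  have "y \<in> ?S" if y: "y \<in> faff ?S" "\<forall>l. \<bar>y l - q l\<bar> < \<epsilon>" for y
  proof (rule sign_cellI_masked[OF \<sigma>])
    show "y \<in> Rn (dims N (a - 1))" using faff_subset_Rn[OF sign_cell_subset_Rn] y(1) by blast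
    show "\<forall>e\<le>d. \<forall>j<dims N (a + e). sign_ok (\<sigma> e j) (?M e y j)"
    proof (intro allI impI)
      fix e j assume ej: "e \<le> d" "j < dims N (a + e)"
      show "sign_ok (\<sigma> e j) (?M e y j)"
      proof (cases "preact N a e q j = 0")
        case True
        then have "?M e y j = 0"
          using zeros[OF ej] M_eq ej(1) y(1) affine_form_masked_preact
          by (intro affine_form_zero_on_faff) auto
        then show ?thesis by (simp add: sign_ok_0)
      next
        case False
        then have "(e, j) \<in> NZ" using ej by (simp add: NZ_def)
        then have "sgn (?M e y j) = sgn (preact N a e q j)"
          using \<epsilon>(2) y(2) M_eq[OF q ej(1)] unfolding F_def by fastforce
        then show ?thesis using q ej by (auto simp: sign_cell_def intro: sign_ok_sgn_cong)
      qed
    qed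
  qed
  then show ?thesis unfolding frelint_def using q \<epsilon>(1) by blast
qed

lemma continuous_on_aff_layer:
  assumes "\<And>l. continuous_on UNIV (\<lambda>y. x y l)"
  shows "continuous_on UNIV (\<lambda>y. aff_layer N i (x y) j)"
proof (cases "j < dims N i")
  case True
  then show ?thesis unfolding aff_layer_def by (simp add: continuous_intros assms)
qed (simp add: aff_layer_def)

lemma continuous_on_preact: "continuous_on UNIV (\<lambda>y. preact N a e y j)"
proof (induction e arbitrary: j)
  case 0
  show ?case by (simp add: continuous_on_aff_layer continuous_on_product_coordinates)
next
  case (Suc e)
  show ?case
    unfolding preact.simps relu_v_def by (intro continuous_on_aff_layer continuous_intros Suc.IH)
qed

lemma closed_sign_ok: "continuous_on UNIV f \<Longrightarrow> closed {y. sign_ok s (f y)}"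
  unfolding sign_ok_def
  by (cases "s = 0") (simp_all add: closed_Collect_eq closed_Collect_le continuous_intros)

lemma closed_Rn: "closed (Rn n)"
proof -
  have "Rn n = (\<Inter>l\<in>{n..}. {y. y l = 0})" by (auto simp: Rn_def)
  then show ?thesis
    by (simp add: closed_INT closed_Collect_eq continuous_on_product_coordinates)
qed

lemma closed_sign_cell: "closed (sign_cell N a d \<sigma>)"
proof -
  have "sign_cell N a d \<sigma> = Rn (dims N (a - 1)) \<inter>
      (\<Inter>e\<in>{..d}. \<Inter>j\<in>{..<dims N (a + e)}. {y. sign_ok (\<sigma> e j) (preact N a e y j)})"
    by (auto simp: sign_cell_def)
  then show ?thesis
    by (simp add: closed_Int closed_INT closed_Rn closed_sign_ok continuous_on_preact)
qed

definition zero_directions :: "net \<Rightarrow> nat \<Rightarrow> nat set \<Rightarrow> vect set" where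
  "zero_directions N i S =
     {d \<in> Rn (dims N (i - 1)). \<forall>j\<in>S. linear_part (\<lambda>x. aff_layer N i x j) d = 0}"

lemma affine_form_aff_layer_coord: "affine_form (dims N (i - 1)) (\<lambda>y. aff_layer N i y j)"
  using affine_form_masked_preact[of N i \<mu> 0 j] by simp

lemma genericD:
  assumes "generic N" "1 \<le> i" "i \<le> depth N + 1" "S \<subseteq> {..<dims N i}"
  defines "K \<equiv> {y \<in> Rn (dims N (i - 1)). \<forall>j\<in>S. aff_layer N i y j = 0}"
  shows "card S \<le> dims N (i - 1) \<Longrightarrow> K \<noteq> {} \<and> affdim K = dims N (i - 1) - card S"
    and "dims N (i - 1) < card S \<Longrightarrow> K = {}"
proof -
  have "\<forall>S\<subseteq>{..<dims N i}. let K = {y \<in> Rn (dims N (i - 1)). \<forall>j\<in>S. aff_layer N i y j = 0} in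
      (card S \<le> dims N (i - 1) \<longrightarrow> K \<noteq> {} \<and> affdim K = dims N (i - 1) - card S) \<and>
      (dims N (i - 1) < card S \<longrightarrow> K = {})"
    using assms(1-3) unfolding generic_def by simp
  then have "(card S \<le> dims N (i - 1) \<longrightarrow> K \<noteq> {} \<and> affdim K = dims N (i - 1) - card S) \<and>
      (dims N (i - 1) < card S \<longrightarrow> K = {})"
    using assms(4) unfolding K_def Let_def by blast
  then show "card S \<le> dims N (i - 1) \<Longrightarrow> K \<noteq> {} \<and> affdim K = dims N (i - 1) - card S"
    and "dims N (i - 1) < card S \<Longrightarrow> K = {}" by auto
qed

lemma generic_dim_zero_directions:
  assumes gen: "generic N" and i: "1 \<le> i" "i \<le> depth N + 1"
    and S: "S \<subseteq> {..<dims N i}" "card S \<le> dims N (i - 1)"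
  shows "fdim (zero_directions N i S) = dims N (i - 1) - card S"
proof -
  define K where "K = {z \<in> Rn (dims N (i - 1)). \<forall>j\<in>S. aff_layer N i z j = 0}"
  have K: "K \<noteq> {}" "affdim K = dims N (i - 1) - card S"
    using genericD(1)[OF gen i S(1)] S(2) by (simp_all add: K_def)
  define p where "p = (SOME x. x \<in> K)"
  have p: "p \<in> K" unfolding p_def using K(1) by (simp add: some_in_eq)
  have diff: "aff_layer N i z j - aff_layer N i p j = linear_part (\<lambda>x. aff_layer N i x j) (z - p)"
    for z j by (rule affine_form_diff[OF affine_form_aff_layer_coord])
  have "(\<lambda>z. z - p) ` K = zero_directions N i S"
  proof
    show "(\<lambda>z. z - p) ` K \<subseteq> zero_directions N i S"
      using p diff[symmetric] by (auto simp: zero_directions_def K_def Rn_diff)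
    show "zero_directions N i S \<subseteq> (\<lambda>z. z - p) ` K"
    proof
      fix d assume d: "d \<in> zero_directions N i S"
      have "aff_layer N i (d + p) j = linear_part (\<lambda>x. aff_layer N i x j) d + aff_layer N i p j" for j
        using diff[of "d + p" j] by simp
      then have "d + p \<in> K" using d p by (auto simp: zero_directions_def K_def Rn_add)
      then show "d \<in> (\<lambda>z. z - p) ` K" by (intro image_eqI[of _ _ "d + p"]) auto
    qed
  qed
  then show ?thesis using K(2) by (simp add: affdim_def p_def)
qed

lemma generic_card_zeros_le:
  assumes gen: "generic N" and i: "1 \<le> i" "i \<le> depth N + 1" and y: "y \<in> Rn (dims N (i - 1))"
  shows "card {j. j < dims N i \<and> aff_layer N i y j = 0} \<le> dims N (i - 1)"
  using genericD(2)[OF gen i, of "{j. j < dims N i \<and> aff_layer N i y j = 0}"] y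
  by (force simp: not_le)

lemma generic_first_layer_separates:
  assumes gen: "generic N" and width: "dims N 0 \<le> dims N 1"
    and d: "d \<in> Rn (dims N 0)" "d \<noteq> 0"
  shows "\<exists>j<dims N 1. linear_part (\<lambda>x. aff_layer N 1 x j) d \<noteq> 0"
proof (rule ccontr)
  assume "\<not> ?thesis"
  then have "d \<in> zero_directions N 1 {..<dims N 0}"
    using d(1) width by (auto simp: zero_directions_def)
  moreover have "fdim (zero_directions N 1 {..<dims N 0}) = 0"
    using generic_dim_zero_directions[OF gen, of 1 "{..<dims N 0}"] width by simp
  ultimately have "fdim {d} \<le> 0"
    using dim_le_dim_of_span[of "{d}" "zero_directions N 1 {..<dims N 0}" "dims N 0"]
      fv.span_base[of d] by (auto simp: zero_directions_def)
  then show False using d(2) fv.dim_eq_card_independent[of "{d}"] fv.dependent_single[of d] by simp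
qed

definition signs_at :: "net \<Rightarrow> nat \<Rightarrow> vect \<Rightarrow> nat \<Rightarrow> nat \<Rightarrow> int" where
  "signs_at N a y e j = int_sgn (preact N a e y j)"

lemma sign_pattern_signs_at: "sign_pattern (signs_at N a y)"
  unfolding signs_at_def by (rule sign_pattern_int_sgn)

lemma mem_sign_cell_signs_at: "y \<in> Rn (dims N (a - 1)) \<Longrightarrow> y \<in> sign_cell N a d (signs_at N a y)"
  by (simp add: sign_cell_def signs_at_def sign_ok_int_sgn)

lemma preact_zero_on_sign_cell_signs_at:
  assumes "z \<in> sign_cell N a d (signs_at N a y)" "e \<le> d" "j < dims N (a + e)"
    "preact N a e y j = 0"
  shows "preact N a e z j = 0"
proof -
  have "sign_ok (int_sgn (preact N a e y j)) (preact N a e z j)"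
    using assms(1-3) unfolding sign_cell_def signs_at_def by blast
  then show ?thesis using assms(4) sign_ok_int_sgn_0 by simp
qed

lemma frelint_sign_cell_signs_at:
  "y \<in> Rn (dims N (a - 1)) \<Longrightarrow> y \<in> frelint (sign_cell N a d (signs_at N a y))"
  by (intro sign_cell_frelintI sign_pattern_signs_at mem_sign_cell_signs_at)
     (auto intro: preact_zero_on_sign_cell_signs_at)

lemma sign_cell_signs_at_in_canon:
  "1 \<le> a \<Longrightarrow> a + d \<le> depth N + 1 \<Longrightarrow> y \<in> Rn (dims N (a - 1)) \<Longrightarrow>
    sign_cell N a d (signs_at N a y) \<in> canon N a d"
  using mem_sign_cell_signs_at[of y N a d] by (intro sign_cell_in_canon sign_pattern_signs_at) auto

lemma sign_cell_signs_at_subset: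
  assumes "sign_pattern \<sigma>" "x \<in> sign_cell N a d \<sigma>"
  shows "sign_cell N a d (signs_at N a x) \<subseteq> sign_cell N a d \<sigma>"
  using assms sign_ok_int_sgn_trans
  by (fastforce simp: sign_cell_def signs_at_def sign_pattern_def)

text \<open>\<open>point_cell N a y\<close> is the cell of \<open>C(F^(a))\<close> whose relative interior contains \<open>y\<close>.\<close>

definition point_cell :: "net \<Rightarrow> nat \<Rightarrow> vect \<Rightarrow> vect set" where
  "point_cell N a y = sign_cell N a (depth N + 1 - a) (signs_at N a y)"

definition zero_nodes :: "net \<Rightarrow> nat \<Rightarrow> nat \<Rightarrow> vect \<Rightarrow> (nat \<times> nat) set" where
  "zero_nodes N a d y = {(e, j) \<in> layer_nodes N a d. preact N a e y j = 0}"

lemma finite_zero_nodes [simp]: "finite (zero_nodes N a d y)"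
  by (rule finite_subset[OF _ finite_layer_nodes]) (auto simp: zero_nodes_def)

lemma mem_zero_nodes [simp]:
  "(e, j) \<in> zero_nodes N a d y \<longleftrightarrow> e \<le> d \<and> j < dims N (a + e) \<and> preact N a e y j = 0"
  by (simp add: zero_nodes_def)

lemma zero_nodes_mono: "d \<le> d' \<Longrightarrow> zero_nodes N a d y \<subseteq> zero_nodes N a d' y"
  by auto

lemma point_cell_Suc:
  assumes "1 \<le> a" "a \<le> depth N"
  shows "point_cell N a y = {z \<in> sign_cell N a 0 (signs_at N a y).
    relu_v (aff_layer N a z) \<in> point_cell N (Suc a) (relu_v (aff_layer N a y))}"
proof -
  have m: "depth N + 1 - a = Suc (depth N - a)" "depth N + 1 - Suc a = depth N - a"
    using assms by auto
  have all: "(\<forall>e\<le>Suc m. P e) \<longleftrightarrow> P 0 \<and> (\<forall>e\<le>m. P (Suc e))" for P m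
    using All_less_Suc2[of "Suc m" P] by (simp add: less_Suc_eq_le)
  show ?thesis
    unfolding point_cell_def sign_cell_def signs_at_def m all preact_Suc_shift
    by (auto simp: aff_layer_in_Rn relu_v_in_Rn)
qed

lemma card_zero_nodes_Suc:
  "card (zero_nodes N a (Suc d) y) = card {j. j < dims N a \<and> aff_layer N a y j = 0}
    + card (zero_nodes N (Suc a) d (relu_v (aff_layer N a y)))"
proof -
  let ?Z = "{j. j < dims N a \<and> aff_layer N a y j = 0}"
  let ?Y = "zero_nodes N (Suc a) d (relu_v (aff_layer N a y))"
  have "zero_nodes N a (Suc d) y = Pair 0 ` ?Z \<union> apfst Suc ` ?Y"
  proof (rule set_eqI)
    fix z :: "nat \<times> nat"
    obtain e j where z: "z = (e, j)" by (cases z)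
    show "z \<in> zero_nodes N a (Suc d) y \<longleftrightarrow> z \<in> Pair 0 ` ?Z \<union> apfst Suc ` ?Y"
      unfolding z
      by (cases e) (auto simp: image_iff preact_Suc_shift intro!: bexI[of _ "(e - 1, j)"] simp del: preact.simps(2))
  qed
  moreover have "card (Pair 0 ` ?Z \<union> apfst Suc ` ?Y) = card ?Z + card ?Y"
    by (subst card_Un_disjoint) (auto simp: card_image inj_on_def apfst_def map_prod_def split: prod.splits)
  ultimately show ?thesis by simp
qed

subsection \<open>Counting vanishing nodes\<close>

definition active_linear :: "net \<Rightarrow> nat \<Rightarrow> vect \<Rightarrow> vect \<Rightarrow> vect" where
  "active_linear N a y d =
     (\<lambda>j. if aff_layer N a y j > 0 then linear_part (\<lambda>x. aff_layer N a x j) d else 0)"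

lemma module_hom_active_linear: "module_hom fscale fscale (active_linear N a y)"
  unfolding module_hom_iff_linear Vector_Spaces.linear_iff
  using linear_part_add[OF affine_form_aff_layer_coord] linear_part_scale[OF affine_form_aff_layer_coord]
  by (auto simp: vector_space_fscale active_linear_def fscale_def)

lemma relu_diff_eq_active_linear:
  assumes "z \<in> sign_cell N a 0 (signs_at N a y)"
  shows "relu_v (aff_layer N a z) - relu_v (aff_layer N a y) = active_linear N a y (z - y)"
proof
  fix j
  have diff: "aff_layer N a z j - aff_layer N a y j = linear_part (\<lambda>x. aff_layer N a x j) (z - y)"
    by (rule affine_form_diff[OF affine_form_aff_layer_coord])
  show "(relu_v (aff_layer N a z) - relu_v (aff_layer N a y)) j = active_linear N a y (z - y) j"
  proof (cases "j < dims N a")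
    case True
    then have "sign_ok (int_sgn (aff_layer N a y j)) (aff_layer N a z j)"
      using assms by (simp add: sign_cell_0 signs_at_def)
    then show ?thesis using diff
      by (auto simp: relu_v_def active_linear_def int_sgn_def sign_ok_def split: if_splits)
  qed (simp add: relu_v_def active_linear_def aff_layer_beyond)
qed

lemma hyperplane_cell_directions:
  assumes "z \<in> sign_cell N a 0 (signs_at N a y)" "y \<in> Rn (dims N (a - 1))"
  shows "z - y \<in> zero_directions N a {j. j < dims N a \<and> aff_layer N a y j = 0}"
proof -
  have "aff_layer N a z j = 0" if "j < dims N a" "aff_layer N a y j = 0" for j
    using preact_zero_on_sign_cell_signs_at[OF assms(1), of 0 j] that by simp
  moreover have "z - y \<in> Rn (dims N (a - 1))"
    using assms sign_cell_subset_Rn Rn_diff by blast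
  ultimately show ?thesis
    using affine_form_diff[OF affine_form_aff_layer_coord, where x=z and y=y, symmetric]
    by (auto simp: zero_directions_def)
qed

lemma supertransversal_spans:
  assumes st: "supertransversal N" and a: "1 \<le> a" "a \<le> depth N"
    and y: "y \<in> Rn (dims N (a - 1))" and y': "y' = relu_v (aff_layer N a y)"
  shows "Rn (dims N a) \<subseteq> fv.span (active_linear N a y ` zero_directions N a
    {j. j < dims N a \<and> aff_layer N a y j = 0} \<union> {w - y' | w. w \<in> point_cell N (Suc a) y'})"
    (is "_ \<subseteq> fv.span ?G")
proof -
  let ?R = "sign_cell N a 0 (signs_at N a y)" and ?D = "point_cell N (Suc a) y'"
  have y'_Rn: "y' \<in> Rn (dims N a)" by (simp add: y' aff_layer_in_Rn relu_v_in_Rn)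
  have "?R \<in> hyp_cells N a"
    using sign_cell_signs_at_in_canon[of a 0 N y] a y by simp
  moreover have "?D \<in> canon N (a + 1) (depth N - a)"
    using sign_cell_signs_at_in_canon[of "Suc a" "depth N - a" N y'] a y'_Rn
    by (simp add: point_cell_def)
  ultimately have "transverse_on (layer N a) ?R ?D (dims N a)"
    using st a unfolding supertransversal_def by auto
  moreover have "y \<in> frelint ?R" "y' \<in> frelint ?D"
    using frelint_sign_cell_signs_at y y'_Rn by (auto simp: point_cell_def)
  ultimately have span: "fv.span ({layer N a z - layer N a y | z. z \<in> frelint ?R}
      \<union> {z - w | z w. z \<in> frelint ?D \<and> w \<in> frelint ?D}) = Rn (dims N a)"
    using y' unfolding transverse_on_def by (simp add: layer_def a(2))
  have "x \<in> fv.span ?G" if x: "x \<in> {layer N a z - layer N a y | z. z \<in> frelint ?R}" for x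
  proof -
    obtain z where z: "z \<in> ?R" "x = layer N a z - layer N a y"
      using x unfolding frelint_def by blast
    then have "x = active_linear N a y (z - y)"
      using relu_diff_eq_active_linear[OF z(1)] by (simp add: layer_def a(2))
    then show ?thesis using hyperplane_cell_directions[OF z(1) y] by (intro fv.span_base) blast
  qed
  moreover have "x \<in> fv.span ?G" if x: "x \<in> {z - w | z w. z \<in> frelint ?D \<and> w \<in> frelint ?D}" for x
  proof -
    obtain z w where zw: "z \<in> ?D" "w \<in> ?D" "x = (z - y') - (w - y')"
      using x unfolding frelint_def by auto
    then have "z - y' \<in> ?G" "w - y' \<in> ?G" by auto
    then show ?thesis unfolding zw(3) by (rule fv.span_diff[OF fv.span_base fv.span_base])
  qed
  ultimately have "{layer N a z - layer N a y | z. z \<in> frelint ?R}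
      \<union> {z - w | z w. z \<in> frelint ?D \<and> w \<in> frelint ?D} \<subseteq> fv.span ?G"
    by blast
  then show ?thesis
    using span fv.span_minimal[OF _ fv.subspace_span] by blast
qed

lemma point_cell_directions:
  assumes a: "1 \<le> a" "a \<le> depth N" and y: "y \<in> Rn (dims N (a - 1))"
    and y': "y' = relu_v (aff_layer N a y)" and z: "z \<in> point_cell N a y"
  shows "z - y \<in> zero_directions N a {j. j < dims N a \<and> aff_layer N a y j = 0}"
    and "active_linear N a y (z - y) \<in> {w - y' | w. w \<in> point_cell N (Suc a) y'}"
proof -
  have z: "z \<in> sign_cell N a 0 (signs_at N a y)" "relu_v (aff_layer N a z) \<in> point_cell N (Suc a) y'"
    using point_cell_Suc[OF a] y' z by auto
  show "z - y \<in> zero_directions N a {j. j < dims N a \<and> aff_layer N a y j = 0}"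
    using hyperplane_cell_directions[OF z(1) y] .
  have "active_linear N a y (z - y) = relu_v (aff_layer N a z) - y'"
    using relu_diff_eq_active_linear[OF z(1)] y' by simp
  then show "active_linear N a y (z - y) \<in> {w - y' | w. w \<in> point_cell N (Suc a) y'}"
    using z(2) by auto
qed

lemma dim_point_cell_plus_card_zero_nodes_step:
  assumes gen: "generic N" and st: "supertransversal N" and a: "1 \<le> a" "a \<le> depth N"
    and y: "y \<in> Rn (dims N (a - 1))" and y': "y' = relu_v (aff_layer N a y)"
    and IH: "fdim {w - y' | w. w \<in> point_cell N (Suc a) y'}
      + card (zero_nodes N (Suc a) (depth N - a) y') \<le> dims N a"
  shows "fdim {z - y | z. z \<in> point_cell N a y} + card (zero_nodes N a (depth N + 1 - a) y)
    \<le> dims N (a - 1)"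
proof -
  define Z where "Z = {j. j < dims N a \<and> aff_layer N a y j = 0}"
  define V where "V = zero_directions N a Z"
  define W where "W = {w - y' | w. w \<in> point_cell N (Suc a) y'}"
  let ?M = "active_linear N a y"
  have card_Z: "card Z \<le> dims N (a - 1)"
    using generic_card_zeros_le[OF gen _ _ y] a by (simp add: Z_def)
  then have dim_V: "fdim V = dims N (a - 1) - card Z"
    using generic_dim_zero_directions[OF gen, of a Z] a by (simp add: V_def Z_def subset_eq)
  have V: "V \<subseteq> Rn (dims N (a - 1))" by (auto simp: V_def zero_directions_def)
  have "point_cell N (Suc a) y' \<subseteq> Rn (dims N a)" "y' \<in> Rn (dims N a)"
    using sign_cell_subset_Rn[of N "Suc a"] by (simp_all add: point_cell_def y' aff_layer_in_Rn relu_v_in_Rn)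
  then have "W \<subseteq> Rn (dims N a)" by (auto simp: W_def intro: Rn_diff)
  then have transversal: "fdim {d\<in>V. ?M d \<in> fv.span W} + dims N a \<le> fdim V + fdim W"
    using V supertransversal_spans[OF st a y y'] module_hom_active_linear
    by (intro dim_transversal_preimage) (auto simp: V_def W_def Z_def)
  have "{z - y | z. z \<in> point_cell N a y} \<subseteq> {d\<in>V. ?M d \<in> fv.span W}"
    using point_cell_directions[OF a y y'] fv.span_base by (fastforce simp: V_def W_def Z_def)
  then have "fdim {z - y | z. z \<in> point_cell N a y} \<le> fdim {d\<in>V. ?M d \<in> fv.span W}"
    using V fv.span_superset by (intro dim_le_dim_of_span[of _ _ "dims N (a - 1)"]) blast+
  moreover have "card (zero_nodes N a (depth N + 1 - a) y)
      = card Z + card (zero_nodes N (Suc a) (depth N - a) y')"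
    using card_zero_nodes_Suc[of N a "depth N - a" y] y' a by (simp add: Z_def Suc_diff_le)
  ultimately show ?thesis using transversal dim_V IH card_Z unfolding W_def by linarith
qed

lemma dim_point_cell_plus_card_zero_nodes_le:
  assumes gen: "generic N" and st: "supertransversal N" and a: "1 \<le> a" "a \<le> depth N + 1"
    and y: "y \<in> Rn (dims N (a - 1))"
  shows "fdim {z - y | z. z \<in> point_cell N a y} + card (zero_nodes N a (depth N + 1 - a) y)
    \<le> dims N (a - 1)"
  using a y
proof (induction "depth N + 1 - a" arbitrary: a y)
  case 0
  then have a: "a = depth N + 1" by simp
  define Z where "Z = {j. j < dims N a \<and> aff_layer N a y j = 0}"
  have "zero_nodes N a 0 y = Pair 0 ` Z" by (auto simp: Z_def)
  then have card: "card (zero_nodes N a (depth N + 1 - a) y) = card Z"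
    using a by (simp add: card_image inj_on_def)
  have card_Z: "card Z \<le> dims N (a - 1)"
    using generic_card_zeros_le[OF gen 0(2,3,4)] by (simp add: Z_def)
  have "{z - y | z. z \<in> point_cell N a y} \<subseteq> zero_directions N a Z"
    using hyperplane_cell_directions 0(4) a by (auto simp: point_cell_def Z_def)
  then have "{z - y | z. z \<in> point_cell N a y} \<subseteq> fv.span (zero_directions N a Z)"
    using fv.span_superset by blast
  then have "fdim {z - y | z. z \<in> point_cell N a y} \<le> fdim (zero_directions N a Z)"
    by (rule dim_le_dim_of_span) (auto simp: zero_directions_def)
  also have "\<dots> = dims N (a - 1) - card Z"
    using generic_dim_zero_directions[OF gen, of a Z] card_Z 0(2,3) by (simp add: Z_def subset_eq)
  finally show ?case using card card_Z by linarith
next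
  case (Suc m)
  define y' where "y' = relu_v (aff_layer N a y)"
  have "y' \<in> Rn (dims N (Suc a - 1))" by (simp add: y'_def aff_layer_in_Rn relu_v_in_Rn)
  moreover have "m = depth N + 1 - Suc a" "1 \<le> Suc a" "Suc a \<le> depth N + 1"
    using Suc.hyps(2) by simp_all
  ultimately have "fdim {w - y' | w. w \<in> point_cell N (Suc a) y'}
      + card (zero_nodes N (Suc a) (depth N - a) y') \<le> dims N a"
    using Suc.hyps(1)[of "Suc a" y'] by simp
  then show ?case
    using dim_point_cell_plus_card_zero_nodes_step[OF gen st Suc.prems(1) _ Suc.prems(3) y'_def] Suc
    by simp
qed

corollary card_zero_nodes_le:
  assumes "generic N" "supertransversal N" "y \<in> Rn (dims N 0)" "d \<le> depth N"
  shows "card (zero_nodes N 1 d y) \<le> dims N 0"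
proof -
  have "card (zero_nodes N 1 d y) \<le> card (zero_nodes N 1 (depth N) y)"
    using assms(4) by (intro card_mono zero_nodes_mono) auto
  then show ?thesis using dim_point_cell_plus_card_zero_nodes_le[OF assms(1,2), of 1 y] assms(3)
    by simp
qed

lemma dim_common_kernel:
  assumes "finite Z" "\<And>z. z \<in> Z \<Longrightarrow> affine_form n (f z)"
  shows "n \<le> fdim {d \<in> Rn n. \<forall>z\<in>Z. linear_part (f z) d = 0} + card Z"
  using assms
proof (induction Z rule: finite_induct)
  case (insert z Z)
  define V where "V = {d \<in> Rn n. \<forall>z\<in>Z. linear_part (f z) d = 0}"
  have lin: "linear_part (f z') (x + y) = linear_part (f z') x + linear_part (f z') y"
    "linear_part (f z') (fscale c x) = c * linear_part (f z') x" if "z' \<in> insert z Z" for z' x y c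
    using insert.prems[OF that] by (simp_all add: linear_part_add linear_part_scale)
  have "fv.subspace V"
    unfolding fv.subspace_def
  proof (intro conjI ballI allI)
    show "0 \<in> V" by (simp add: V_def Rn_def linear_part_def)
    show "x + y \<in> V" if "x \<in> V" "y \<in> V" for x y
      using that lin(1) by (simp add: V_def Rn_add)
    show "fscale c x \<in> V" if "x \<in> V" for c x
      using that lin(2) by (simp add: V_def Rn_def fscale_apply)
  qed
  then have "fdim V \<le> fdim {d\<in>V. linear_part (f z) d = 0} + 1"
    using lin[of z] by (intro dim_le_dim_kernel_Suc[of _ n]) (auto simp: V_def)
  moreover have "{d\<in>V. linear_part (f z) d = 0} = {d \<in> Rn n. \<forall>z'\<in>insert z Z. linear_part (f z') d = 0}"
    by (auto simp: V_def)
  ultimately show ?case using insert by (simp add: V_def)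
qed simp

lemma frelint_extend_beyond:
  assumes q: "q \<in> frelint S" and x: "x \<in> S" and S: "S \<subseteq> Rn n"
  shows "\<exists>t>0. (\<lambda>l. q l + t * (q l - x l)) \<in> S"
proof -
  obtain \<epsilon> where q_S: "q \<in> S" and \<epsilon>: "\<epsilon> > 0" "\<forall>y\<in>faff S. (\<forall>l. \<bar>y l - q l\<bar> < \<epsilon>) \<longrightarrow> y \<in> S"
    using q by (auto simp: frelint_def)
  define B where "B = 1 + (\<Sum>i<n. \<bar>q i - x i\<bar>)"
  have B: "B \<ge> 1" "\<bar>q l - x l\<bar> \<le> B - 1" for l
  proof -
    show "B \<ge> 1" by (simp add: B_def sum_nonneg)
    show "\<bar>q l - x l\<bar> \<le> B - 1"
    proof (cases "l < n")
      case False
      then have "q l = 0" "x l = 0" using q_S x S by (auto simp: Rn_def)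
      then show ?thesis by (simp add: B_def sum_nonneg)
    qed (simp add: B_def member_le_sum[where f="\<lambda>i. \<bar>q i - x i\<bar>"])
  qed
  define t where "t = \<epsilon> / (2 * B)"
  define y where "y = (\<lambda>l. q l + t * (q l - x l))"
  have t: "t > 0" "t * B < \<epsilon>" using \<epsilon>(1) B(1) by (simp_all add: t_def)
  have "\<bar>y l - q l\<bar> < \<epsilon>" for l
  proof -
    have "\<bar>y l - q l\<bar> = t * \<bar>q l - x l\<bar>" using t(1) by (simp add: y_def abs_mult)
    also have "\<dots> \<le> t * (B - 1)" using B(2) t(1) by (intro mult_left_mono) auto
    finally show ?thesis using t by (simp add: algebra_simps)
  qed
  moreover have "y \<in> faff S"
  proof (cases "q = x")
    case True
    then show ?thesis using q_S subset_faff by (auto simp: y_def)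
  next
    case False
    let ?c = "\<lambda>w. if w = q then 1 + t else - t"
    have "y = affine_comb ?c {q, x}" using False by (auto simp: y_def affine_comb_def algebra_simps)
    moreover have "sum ?c {q, x} = 1" using False by simp
    moreover have "finite {q, x}" "{q, x} \<subseteq> S" "{q, x} \<noteq> {}" using q_S x by auto
    ultimately show ?thesis unfolding faff_def by (intro CollectI exI conjI)
  qed
  ultimately show ?thesis using \<epsilon>(2) t(1) by (auto simp: y_def)
qed

lemma sign_cell_sgn_cong:
  assumes "x \<in> sign_cell N a d \<sigma>" "y \<in> Rn (dims N (a - 1))"
    "\<And>e j. e \<le> d \<Longrightarrow> j < dims N (a + e) \<Longrightarrow> sgn (preact N a e y j) = sgn (preact N a e x j)"
  shows "y \<in> sign_cell N a d \<sigma>"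
  using assms(1,2) sign_ok_sgn_cong[OF _ assms(3)] by (auto simp: sign_cell_def)

lemma sign_cell_mono: "d \<le> d' \<Longrightarrow> sign_cell N a d' \<sigma> \<subseteq> sign_cell N a d \<sigma>"
  by (auto simp: sign_cell_def)

lemma sgn_pt_Suc: "e \<le> depth N \<Longrightarrow> sgn_pt N (Suc e) j y = sgn (preact N 1 e y j)"
  using node_eq_preact[of "Suc e" N j y] by (simp add: sgn_pt_def)

text \<open>\<open>s\<close> is where the first nonconstant function \<open>t \<mapsto> a z + t * b z\<close> reaches zero; up to there
  no sign is reversed, which the factors \<open>c \<ge> 0\<close> express.\<close>

lemma first_zero_on_ray:
  fixes a b :: "'z \<Rightarrow> real"
  assumes "finite Z" "z0 \<in> Z" "b z0 \<noteq> 0" "- a z0 / b z0 > 0"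
    and ab: "\<And>z. z \<in> Z \<Longrightarrow> b z \<noteq> 0 \<Longrightarrow> a z \<noteq> 0"
  shows "\<exists>s. (\<forall>z\<in>Z. \<exists>c\<ge>0. a z + s * b z = c * a z) \<and> (\<exists>z\<in>Z. b z \<noteq> 0 \<and> a z + s * b z = 0)"
proof -
  define P where "P = {z \<in> Z. b z \<noteq> 0 \<and> - a z / b z > 0}"
  define s where "s = Min ((\<lambda>z. - a z / b z) ` P)"
  have P: "finite P" "z0 \<in> P" using assms(1-4) by (auto simp: P_def)
  then have "s \<in> (\<lambda>z. - a z / b z) ` P" unfolding s_def by (intro Min_in) auto
  then obtain zs where zs: "zs \<in> P" "- a zs / b zs = s" by blast
  have s_le: "s \<le> - a z / b z" if "z \<in> P" for z using P(1) that by (simp add: s_def)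
  have s_pos: "s > 0" using zs by (auto simp: P_def)
  have ratio: "s / r \<le> 1" if "r \<noteq> 0" "r > 0 \<Longrightarrow> s \<le> r" for r :: real
  proof (cases "r > 0")
    case False
    then have "s / r < 0" using that(1) s_pos by (simp add: divide_pos_neg)
    then show ?thesis by simp
  qed (use that in \<open>simp add: divide_le_eq_1\<close>)
  have "\<exists>c\<ge>0. a z + s * b z = c * a z" if z: "z \<in> Z" for z
  proof (cases "b z = 0")
    case False
    have "a z \<noteq> 0" using ab[OF z False] .
    then have "a z + s * b z = (1 - s / (- a z / b z)) * a z"
      using False by (simp add: field_simps)
    moreover have "s / (- a z / b z) \<le> 1"
      using \<open>a z \<noteq> 0\<close> False s_le[of z] z by (intro ratio) (auto simp: P_def)
    ultimately show ?thesis by (intro exI[of _ "1 - s / (- a z / b z)"]) simp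
  qed (intro exI[of _ 1], simp)
  moreover have "b zs \<noteq> 0" "a zs + s * b zs = 0" using zs by (auto simp: P_def field_simps)
  ultimately show ?thesis using zs(1) by (auto simp: P_def)
qed

lemma first_zero_on_line:
  fixes a b :: "'z \<Rightarrow> real"
  assumes "finite Z" "z0 \<in> Z" "b z0 \<noteq> 0" "\<And>z. z \<in> Z \<Longrightarrow> b z \<noteq> 0 \<Longrightarrow> a z \<noteq> 0"
  shows "\<exists>s. (\<forall>z\<in>Z. \<exists>c\<ge>0. a z + s * b z = c * a z) \<and> (\<exists>z\<in>Z. b z \<noteq> 0 \<and> a z + s * b z = 0)"
proof (cases "- a z0 / b z0 > 0")
  case True
  then show ?thesis using first_zero_on_ray[of Z z0 b a] assms by blast
next
  case False
  have "a z0 \<noteq> 0" using assms(2-4) by blast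
  then have "- a z0 / (- b z0) > 0" using False assms(3) by (simp add: not_less less_le)
  then obtain s where "\<forall>z\<in>Z. \<exists>c\<ge>0. a z + s * - b z = c * a z" "\<exists>z\<in>Z. - b z \<noteq> 0 \<and> a z + s * - b z = 0"
    using first_zero_on_ray[of Z z0 "\<lambda>z. - b z" a] assms by auto
  then show ?thesis by (intro exI[of _ "- s"]) auto
qed

text \<open>The nodes \<open>(i, j) \<in> P\<close> of layers \<open>i < K + 2\<close> and \<open>(K + 2, j)\<close>, \<open>j \<in> J\<close>, in the
  0-based layer indexing of \<open>preact\<close>.\<close>

definition system_nodes :: "nat \<Rightarrow> (nat \<times> nat) set \<Rightarrow> nat set \<Rightarrow> (nat \<times> nat) set" where
  "system_nodes K P J = apfst (\<lambda>i. i - 1) ` P \<union> Pair (Suc K) ` J"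

lemma card_system_nodes:
  assumes "finite P" "finite J" "P \<subseteq> {(i, j). 1 \<le> i \<and> i < K + 2}"
  shows "card (system_nodes K P J) = card P + card J"
proof -
  have "inj_on (apfst (\<lambda>i. i - 1)) P"
  proof (rule inj_onI)
    fix p p' assume pp: "p \<in> P" "p' \<in> P" "apfst (\<lambda>i. i - 1) p = apfst (\<lambda>i. i - 1) p'"
    then have "1 \<le> fst p" "1 \<le> fst p'" using assms(3) by auto
    then show "p = p'" using pp(3) by (cases p, cases p') auto
  qed
  moreover have "apfst (\<lambda>i. i - 1) ` P \<inter> Pair (Suc K) ` J = {}"
    using assms(3) by (auto simp: apfst_def map_prod_def split: prod.splits)
  ultimately show ?thesis
    unfolding system_nodes_def using assms(1,2)
    by (simp add: card_Un_disjoint card_image inj_on_def)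
qed

lemma finite_node_pairs: "P \<subseteq> {(i, j). 1 \<le> i \<and> i < K + 2 \<and> j < dims N i} \<Longrightarrow> finite P"
  by (rule finite_subset[of _ "SIGMA i:{..<K + 2}. {..<dims N i}"]) auto

lemma system_nodes_subset:
  "P \<subseteq> {(i, j). 1 \<le> i \<and> i < K + 2 \<and> j < dims N i} \<Longrightarrow> J \<subseteq> {..<dims N (K + 2)} \<Longrightarrow>
    system_nodes K P J \<subseteq> layer_nodes N 1 (Suc K)"
  by (auto simp: system_nodes_def)

lemma Suc_mem_iff_mem_system_nodes:
  "P \<subseteq> {(i, j). 1 \<le> i \<and> i < K + 2} \<Longrightarrow> e \<le> K \<Longrightarrow> (Suc e, j) \<in> P \<longleftrightarrow> (e, j) \<in> system_nodes K P J"
  by (force simp: system_nodes_def image_iff)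

lemma split_system_nodes:
  assumes "Z \<subseteq> layer_nodes N 1 (Suc K)"
  obtains P J where "system_nodes K P J = Z" "P \<subseteq> {(i, j). 1 \<le> i \<and> i < K + 2 \<and> j < dims N i}"
    "J \<subseteq> {..<dims N (K + 2)}" "J = {j. (Suc K, j) \<in> Z}"
proof
  show "system_nodes K (apfst Suc ` {(e, j) \<in> Z. e \<le> K}) {j. (Suc K, j) \<in> Z} = Z"
    using assms by (force simp: system_nodes_def image_iff le_Suc_eq)
  show "apfst Suc ` {(e, j) \<in> Z. e \<le> K} \<subseteq> {(i, j). 1 \<le> i \<and> i < K + 2 \<and> j < dims N i}"
    "{j. (Suc K, j) \<in> Z} \<subseteq> {..<dims N (K + 2)}"
    using assms by auto
qed simp

subsection \<open>A fixed cell of the complex\<close>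

text \<open>The cell \<open>C\<close> of \<open>C(F_(k-1))\<close> with \<open>k = K + 2\<close>; node \<open>(i, j)\<close> of the paper is indexed here by
  \<open>(e, j)\<close> with \<open>e = i - 1\<close>.\<close>

locale network_cell =
  fixes N :: net and K :: nat and \<sigma> :: "nat \<Rightarrow> nat \<Rightarrow> int"
  assumes depth_bound: "K + 2 \<le> depth N + 1"
    and pattern: "sign_pattern \<sigma>"
    and cell_nonempty: "sign_cell N 1 K \<sigma> \<noteq> {}"
begin

abbreviation cell :: "vect set" where
  "cell \<equiv> sign_cell N 1 K \<sigma>"

abbreviation cell_aff :: "nat \<Rightarrow> vect \<Rightarrow> nat \<Rightarrow> real" where
  "cell_aff e x j \<equiv> masked_preact N 1 (active_mask \<sigma>) e x j"

abbreviation cell_lin :: "nat \<Rightarrow> nat \<Rightarrow> vect \<Rightarrow> real" where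
  "cell_lin e j \<equiv> linear_part (\<lambda>x. cell_aff e x j)"

lemma affine_form_cell_aff: "affine_form (dims N 0) (\<lambda>x. cell_aff e x j)"
  using affine_form_masked_preact[of N 1 _ e j] by simp

lemma cell_aff_line: "cell_aff e (\<lambda>l. y l + t * d l) j = cell_aff e y j + t * cell_lin e j d"
  by (rule affine_form_line[OF affine_form_cell_aff])

lemma cell_aff_diff: "cell_aff e x j - cell_aff e y j = cell_lin e j (x - y)"
  by (rule affine_form_diff[OF affine_form_cell_aff])

lemma preact_eq_cell_aff: "x \<in> cell \<Longrightarrow> e \<le> Suc K \<Longrightarrow> preact N 1 e x j = cell_aff e x j"
  using preact_eq_masked_preact_on_sign_cell[OF pattern] by simp

lemma node_eq_cell_aff: "x \<in> cell \<Longrightarrow> 1 \<le> i \<Longrightarrow> i \<le> K + 2 \<Longrightarrow> node N i j x = cell_aff (i - 1) x j"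
  using node_eq_preact[of i N j x] preact_eq_cell_aff[of x "i - 1" j] depth_bound by simp

lemma cell_subset_Rn: "cell \<subseteq> Rn (dims N 0)"
  using sign_cell_subset_Rn[of N 1 K \<sigma>] by simp

lemma sign_ok_cell_aff:
  assumes "x \<in> cell" "e \<le> K" "j < dims N (1 + e)"
  shows "sign_ok (\<sigma> e j) (cell_aff e x j)"
proof -
  have "sign_ok (\<sigma> e j) (preact N 1 e x j)" using assms unfolding sign_cell_def by blast
  then show ?thesis using preact_eq_cell_aff[of x e j] assms(1,2) by simp
qed

lemma mem_cellI:
  "x \<in> Rn (dims N 0) \<Longrightarrow> \<forall>e\<le>K. \<forall>j<dims N (1 + e). sign_ok (\<sigma> e j) (cell_aff e x j) \<Longrightarrow> x \<in> cell"
  using sign_cellI_masked[OF pattern, of x N 1 K] by simp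

lemma closure_cell: "closure cell = cell"
  by (rule closure_closed[OF closed_sign_cell])

lemma affine_comb_in_cell:
  assumes Q: "finite Q" "Q \<subseteq> cell" and c: "\<And>t. t \<in> Q \<Longrightarrow> c t \<ge> 0" "sum c Q = 1"
  shows "affine_comb c Q \<in> cell"
proof (rule mem_cellI)
  have "Q \<noteq> {}" using c(2) by auto
  then have "affine_comb c Q \<in> faff cell" using Q c(2) unfolding faff_def by blast
  then show "affine_comb c Q \<in> Rn (dims N 0)" using faff_subset_Rn[OF cell_subset_Rn] by blast
  show "\<forall>e\<le>K. \<forall>j<dims N (1 + e). sign_ok (\<sigma> e j) (cell_aff e (affine_comb c Q) j)"
    using affine_form_affine_comb[OF affine_form_cell_aff Q(1) c(2)] Q c(1) sign_ok_cell_aff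
    by (auto intro!: sign_ok_sum)
qed

lemma cell_aff_eq_affine_extension:
  assumes A: "affine_fun_on (faff cell) A" "\<forall>x\<in>cell. A x = node N i j x"
    and i: "1 \<le> i" "i \<le> K + 2" and x: "x \<in> faff cell"
  shows "A x = cell_aff (i - 1) x j"
proof -
  obtain T c where T: "finite T" "T \<subseteq> cell" "T \<noteq> {}" "sum c T = 1" "x = affine_comb c T"
    using x by (auto simp: faff_def)
  have "A x = (\<Sum>t\<in>T. c t * A t)"
    using A(1) T subset_faff unfolding affine_fun_on_def by blast
  also have "\<dots> = (\<Sum>t\<in>T. c t * cell_aff (i - 1) t j)"
  proof (rule sum.cong)
    fix t assume "t \<in> T"
    then show "c t * A t = c t * cell_aff (i - 1) t j" using T(2) A(2) node_eq_cell_aff i by auto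
  qed simp
  also have "\<dots> = cell_aff (i - 1) x j"
    using affine_form_affine_comb[OF affine_form_cell_aff T(1,4)] T(5) by simp
  finally show ?thesis .
qed

text \<open>The barycentre of one point of the cell and, for every node not vanishing identically on the
  cell, a point where it does not vanish, is a relative interior point.\<close>

lemma exists_frelint_cell: "\<exists>q. q \<in> frelint cell"
proof -
  define NZ where "NZ = {z \<in> layer_nodes N 1 K. \<exists>x\<in>cell. preact N 1 (fst z) x (snd z) \<noteq> 0}"
  have "\<forall>z\<in>NZ. \<exists>x. x \<in> cell \<and> preact N 1 (fst z) x (snd z) \<noteq> 0" by (auto simp: NZ_def)
  then obtain wit where wit: "\<forall>z\<in>NZ. wit z \<in> cell \<and> preact N 1 (fst z) (wit z) (snd z) \<noteq> 0"
    by (auto dest!: bchoice)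
  obtain x0 where x0: "x0 \<in> cell" using cell_nonempty by blast
  define Q where "Q = insert x0 (wit ` NZ)"
  define c where "c = (\<lambda>t::vect. 1 / real (card Q))"
  define q where "q = affine_comb c Q"
  have "finite NZ" by (rule finite_subset[OF _ finite_layer_nodes]) (auto simp: NZ_def)
  then have Q: "finite Q" "Q \<subseteq> cell" "card Q > 0"
    using x0 wit by (auto simp: Q_def card_gt_0_iff)
  then have c: "\<And>t. t \<in> Q \<Longrightarrow> c t > 0" "sum c Q = 1" by (simp_all add: c_def card_gt_0_iff)
  have q: "q \<in> cell" unfolding q_def using Q c by (intro affine_comb_in_cell) (auto simp: less_imp_le)
  have q_aff: "cell_aff e q j = (\<Sum>t\<in>Q. c t * cell_aff e t j)" for e j
    unfolding q_def by (rule affine_form_affine_comb[OF affine_form_cell_aff Q(1) c(2)])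
  have "q \<in> frelint cell"
  proof (rule sign_cell_frelintI[OF pattern q], rule ccontr)
    fix e j assume ej: "e \<le> K" "j < dims N (1 + e)" and q0: "preact N 1 e q j = 0"
      and "\<not> (\<forall>z\<in>cell. preact N 1 e z j = 0)"
    then have "(e, j) \<in> NZ" by (auto simp: NZ_def)
    then have w: "wit (e, j) \<in> Q" "cell_aff e (wit (e, j)) j \<noteq> 0"
      using wit preact_eq_cell_aff[of "wit (e, j)" e j] ej(1) by (auto simp: Q_def)
    then have "sign_ok (\<sigma> e j) (cell_aff e (wit (e, j)) j)"
      using sign_ok_cell_aff[OF _ ej] Q(2) by blast
    moreover have "\<sigma> e j \<in> {-1, 0, 1}" using pattern by (simp add: sign_pattern_def)
    ultimately have "\<sigma> e j \<in> {-1, 1}" using w(2) by (auto simp: sign_ok_def)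
    then have "cell_aff e q j \<noteq> 0"
      unfolding q_aff using Q(1,2) c(1) w sign_ok_cell_aff[OF _ ej]
      by (intro sign_ok_sum_nonzero) auto
    then show False using q0 preact_eq_cell_aff[OF q] ej(1) by simp
  qed
  then show ?thesis by blast
qed

lemma sgn_cell_Suc:
  "e \<le> K \<Longrightarrow> sgn_cell N (Suc e) j cell = sgn (preact N 1 e (SOME q. q \<in> frelint cell) j)"
  using node_eq_preact[of "Suc e" N j] depth_bound by (simp add: sgn_cell_def)

text \<open>Otherwise the node would change sign on the segment from \<open>x\<close> through \<open>q\<close>, slightly extended
  beyond \<open>q\<close>.\<close>

lemma preact_zero_on_cell:
  assumes q: "q \<in> frelint cell" and ej: "e \<le> K" "j < dims N (1 + e)" and q0: "preact N 1 e q j = 0"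
    and x: "x \<in> cell"
  shows "preact N 1 e x j = 0"
proof -
  obtain t where t: "t > 0" and y: "(\<lambda>l. q l + t * (q l - x l)) \<in> cell"
    using frelint_extend_beyond[OF q x cell_subset_Rn] by blast
  have q_cell: "q \<in> cell" using q by (simp add: frelint_def)
  have q0': "cell_aff e q j = 0" using q0 preact_eq_cell_aff[OF q_cell] ej(1) by simp
  have "(\<lambda>l. q l + t * (q l - x l)) = (\<lambda>l. q l + t * (q - x) l)" by simp
  then have "cell_aff e (\<lambda>l. q l + t * (q l - x l)) j = cell_aff e q j + t * cell_lin e j (q - x)"
    by (simp only: cell_aff_line)
  also have "\<dots> = - t * cell_aff e x j"
    using cell_aff_diff[of e q j x, symmetric] q0' by simp
  finally have "cell_aff e (\<lambda>l. q l + t * (q l - x l)) j = - t * cell_aff e x j" .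
  then have "(1 - t / (1 + t)) * cell_aff e (\<lambda>l. q l + t * (q l - x l)) j
      + t / (1 + t) * cell_aff e x j = 0"
    using t by (simp add: field_simps)
  moreover have "0 < t / (1 + t)" "t / (1 + t) < 1" using t by simp_all
  ultimately have "cell_aff e x j = 0"
    using sign_ok_segment_zero[OF sign_ok_cell_aff[OF y ej] sign_ok_cell_aff[OF x ej]] by blast
  then show ?thesis using preact_eq_cell_aff[OF x] ej(1) by simp
qed

lemma cell_lin_zero_on_segment:
  assumes a: "a \<in> cell" and b: "b \<in> cell" and t: "0 < t" "t < 1"
    and u: "u = (\<lambda>l. (1 - t) * a l + t * b l)" "u \<in> cell"
    and ej: "(e, j) \<in> zero_nodes N 1 K u"
  shows "cell_lin e j (b - a) = 0"
proof -
  have e: "e \<le> K" "j < dims N (1 + e)" using ej by auto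
  have "u = (\<lambda>l. a l + t * (b - a) l)" using u(1) by (simp add: algebra_simps)
  then have "cell_aff e u j = cell_aff e a j + t * cell_lin e j (b - a)"
    by (simp only: cell_aff_line)
  moreover have "cell_aff e u j = 0" using ej preact_eq_cell_aff[OF u(2), of e j] by simp
  ultimately have "(1 - t) * cell_aff e a j + t * cell_aff e b j = 0"
    using cell_aff_diff[of e b j a] by (simp add: algebra_simps)
  then have "cell_aff e a j = 0 \<and> cell_aff e b j = 0"
    using sign_ok_segment_zero[OF sign_ok_cell_aff[OF a e] sign_ok_cell_aff[OF b e] t] by simp
  then show ?thesis using cell_aff_diff[of e b j a] by simp
qed

lemma exists_step_keeping_signs:
  assumes v: "v \<in> cell" and dz: "\<And>e j. (e, j) \<in> zero_nodes N 1 (Suc K) v \<Longrightarrow> cell_lin e j d = 0"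
  shows "\<exists>t>0. \<forall>e\<le>Suc K. \<forall>j<dims N (1 + e).
    sgn (cell_aff e (\<lambda>l. v l + t * d l) j) = sgn (preact N 1 e v j)"
proof -
  define NZ where "NZ = {z \<in> layer_nodes N 1 (Suc K). preact N 1 (fst z) v (snd z) \<noteq> 0}"
  have "finite NZ" by (rule finite_subset[OF _ finite_layer_nodes]) (auto simp: NZ_def)
  then have "\<exists>t>0. \<forall>z\<in>NZ. sgn (preact N 1 (fst z) v (snd z) + t * cell_lin (fst z) (snd z) d)
      = sgn (preact N 1 (fst z) v (snd z))"
    by (rule sgn_stable_on_line) (simp add: NZ_def)
  then obtain t where t: "t > 0"
    "\<forall>z\<in>NZ. sgn (preact N 1 (fst z) v (snd z) + t * cell_lin (fst z) (snd z) d)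
      = sgn (preact N 1 (fst z) v (snd z))"
    by blast
  have "sgn (cell_aff e (\<lambda>l. v l + t * d l) j) = sgn (preact N 1 e v j)"
    if ej: "e \<le> Suc K" "j < dims N (1 + e)" for e j
  proof (cases "preact N 1 e v j = 0")
    case True
    moreover have "cell_lin e j d = 0" using True ej by (intro dz) simp
    ultimately show ?thesis using cell_aff_line preact_eq_cell_aff[OF v ej(1)] by simp
  next
    case False
    then have "(e, j) \<in> NZ" using ej by (simp add: NZ_def)
    then show ?thesis using t(2) cell_aff_line preact_eq_cell_aff[OF v ej(1)] by auto
  qed
  then show ?thesis using t(1) by blast
qed

lemma mem_sign_cell_if_sgn_cell_aff:
  assumes v: "v \<in> cell" "v \<in> sign_cell N 1 (Suc K) \<sigma>'" and y: "y \<in> Rn (dims N 0)"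
    and sgn: "\<And>e j. e \<le> Suc K \<Longrightarrow> j < dims N (1 + e) \<Longrightarrow> sgn (cell_aff e y j) = sgn (preact N 1 e v j)"
  shows "y \<in> sign_cell N 1 (Suc K) \<sigma>'"
proof -
  have "sign_ok (\<sigma> e j) (cell_aff e y j)" if ej: "e \<le> K" "j < dims N (1 + e)" for e j
    using sign_ok_sgn_cong[OF sign_ok_cell_aff[OF v(1) ej]] sgn[of e j] ej
      preact_eq_cell_aff[OF v(1), of e j]
    by simp
  then have y_cell: "y \<in> cell" using y by (intro mem_cellI) auto
  show ?thesis
  proof (rule sign_cell_sgn_cong[OF v(2)])
    show "y \<in> Rn (dims N (1 - 1))" using y by simp
    show "sgn (preact N 1 e y j) = sgn (preact N 1 e v j)" if "e \<le> Suc K" "j < dims N (1 + e)" for e j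
      using sgn[OF that] preact_eq_cell_aff[OF y_cell that(1)] by simp
  qed
qed

text \<open>Moving slightly along such a direction would preserve every sign and so stay in the 0-cell.\<close>

lemma direction_zero_at_singleton_cell:
  assumes v: "v \<in> cell" and v_cell: "sign_cell N 1 (Suc K) \<sigma>' = {v}"
    and d: "d \<in> Rn (dims N 0)"
    and dz: "\<And>e j. (e, j) \<in> zero_nodes N 1 (Suc K) v \<Longrightarrow> cell_lin e j d = 0"
  shows "d = 0"
proof -
  obtain t where t: "t > 0" "\<forall>e\<le>Suc K. \<forall>j<dims N (1 + e).
      sgn (cell_aff e (\<lambda>l. v l + t * d l) j) = sgn (preact N 1 e v j)"
    using exists_step_keeping_signs[OF v dz] by blast
  have y: "(\<lambda>l. v l + t * d l) \<in> Rn (dims N 0)" using v d cell_subset_Rn by (auto simp: Rn_def)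
  have "(\<lambda>l. v l + t * d l) \<in> sign_cell N 1 (Suc K) \<sigma>'"
    by (rule mem_sign_cell_if_sgn_cell_aff[OF v _ y]) (use v_cell t(2) in auto)
  then have "(\<lambda>l. v l + t * d l) = v" using v_cell by blast
  then have "t = 0 \<or> d = 0" by (simp add: fun_eq_iff)
  then show "d = 0" using t(1) by simp
qed

lemma line_point_in_cell:
  assumes u: "u \<in> cell" and \<delta>: "\<delta> \<in> Rn (dims N 0)"
    and c: "\<And>e j. e \<le> K \<Longrightarrow> j < dims N (1 + e) \<Longrightarrow>
      \<exists>c\<ge>0. cell_aff e u j + s * cell_lin e j \<delta> = c * cell_aff e u j"
  shows "(\<lambda>l. u l + s * \<delta> l) \<in> cell"
proof (rule mem_cellI)
  show "(\<lambda>l. u l + s * \<delta> l) \<in> Rn (dims N 0)" using u \<delta> cell_subset_Rn by (auto simp: Rn_def)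
  show "\<forall>e\<le>K. \<forall>j<dims N (1 + e). sign_ok (\<sigma> e j) (cell_aff e (\<lambda>l. u l + s * \<delta> l) j)"
  proof (intro allI impI)
    fix e j assume ej: "e \<le> K" "j < dims N (1 + e)"
    then obtain c where "c \<ge> 0" "cell_aff e u j + s * cell_lin e j \<delta> = c * cell_aff e u j"
      using c by blast
    then show "sign_ok (\<sigma> e j) (cell_aff e (\<lambda>l. u l + s * \<delta> l) j)"
      using sign_ok_mult_nonneg[OF sign_ok_cell_aff[OF u ej]] cell_aff_line by (simp add: mult.commute)
  qed
qed

text \<open>Walk from \<open>u\<close> along \<open>\<delta>\<close> until the first further node vanishes.\<close>

lemma exists_more_zero_nodes:
  assumes u: "u \<in> cell" and \<delta>: "\<delta> \<in> Rn (dims N 0)"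
    and keep: "\<And>e j. (e, j) \<in> zero_nodes N 1 K u \<Longrightarrow> cell_lin e j \<delta> = 0"
    and moving: "(e0, j0) \<in> layer_nodes N 1 K" "cell_lin e0 j0 \<delta> \<noteq> 0"
  shows "\<exists>y\<in>cell. zero_nodes N 1 K u \<subset> zero_nodes N 1 K y"
proof -
  let ?a = "\<lambda>z. cell_aff (fst z) u (snd z)" and ?b = "\<lambda>z. cell_lin (fst z) (snd z) \<delta>"
  have zero_u: "(e, j) \<in> zero_nodes N 1 K u \<longleftrightarrow> ?a (e, j) = 0" if "(e, j) \<in> layer_nodes N 1 K" for e j
    using that preact_eq_cell_aff[OF u, of e j] by simp
  have ab: "?a z \<noteq> 0" if "z \<in> layer_nodes N 1 K" "?b z \<noteq> 0" for z
  proof -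
    obtain e j where z: "z = (e, j)" by (cases z)
    show ?thesis using zero_u[of e j] keep[of e j] that unfolding z by auto
  qed
  obtain s where s: "\<forall>z\<in>layer_nodes N 1 K. \<exists>c\<ge>0. ?a z + s * ?b z = c * ?a z"
    "\<exists>z\<in>layer_nodes N 1 K. ?b z \<noteq> 0 \<and> ?a z + s * ?b z = 0"
    using first_zero_on_line[where a="?a" and b="?b", OF finite_layer_nodes moving(1)] moving(2) ab
    by auto
  define y where "y = (\<lambda>l. u l + s * \<delta> l)"
  have y_aff: "cell_aff e y j = ?a (e, j) + s * ?b (e, j)" for e j
    unfolding y_def by (simp only: cell_aff_line fst_conv snd_conv)
  have y: "y \<in> cell"
    unfolding y_def
  proof (rule line_point_in_cell[OF u \<delta>])
    fix e j assume "e \<le> K" "j < dims N (1 + e)"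
    then show "\<exists>c\<ge>0. cell_aff e u j + s * cell_lin e j \<delta> = c * cell_aff e u j"
      using bspec[OF s(1), of "(e, j)"] by simp
  qed
  have zero_y: "(e, j) \<in> zero_nodes N 1 K y \<longleftrightarrow> ?a (e, j) + s * ?b (e, j) = 0"
    if "(e, j) \<in> layer_nodes N 1 K" for e j
    using that preact_eq_cell_aff[OF y, of e j] y_aff[of e j] by simp
  have "zero_nodes N 1 K u \<subseteq> zero_nodes N 1 K y"
  proof clarify
    fix e j assume z: "(e, j) \<in> zero_nodes N 1 K u"
    then have l: "(e, j) \<in> layer_nodes N 1 K" by simp
    then have "?a (e, j) = 0" using zero_u z by blast
    moreover have "?b (e, j) = 0" using keep[OF z] by simp
    ultimately show "(e, j) \<in> zero_nodes N 1 K y" using zero_y[OF l] by simp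
  qed
  moreover obtain e j where l: "(e, j) \<in> layer_nodes N 1 K"
    and ej: "?b (e, j) \<noteq> 0" "?a (e, j) + s * ?b (e, j) = 0"
    using s(2) by auto
  then have "(e, j) \<in> zero_nodes N 1 K y" "(e, j) \<notin> zero_nodes N 1 K u"
    using zero_u[OF l] zero_y[OF l] ab[OF l] by simp_all
  ultimately show ?thesis using y by blast
qed

lemma system_eq_cell_aff:
  assumes A: "\<forall>i\<in>{1..K + 2}. \<forall>j<dims N i.
      affine_fun_on (faff cell) (A i j) \<and> (\<forall>x\<in>cell. A i j x = node N i j x)"
    and J: "J \<subseteq> {..<dims N (K + 2)}" and P: "P \<subseteq> {(i, j). 1 \<le> i \<and> i < K + 2 \<and> j < dims N i}"
  shows "{y \<in> faff cell. (\<forall>j\<in>J. A (K + 2) j y = 0) \<and> (\<forall>(i, j)\<in>P. A i j y = 0)}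
    = {y \<in> faff cell. \<forall>(e, j)\<in>system_nodes K P J. cell_aff e y j = 0}"
proof -
  have A_eq: "A i j y = cell_aff (i - 1) y j"
    if "1 \<le> i" "i \<le> K + 2" "j < dims N i" "y \<in> faff cell" for i j y
    using A that by (intro cell_aff_eq_affine_extension) auto
  have "(\<forall>j\<in>J. A (K + 2) j y = 0) \<longleftrightarrow> (\<forall>j\<in>J. cell_aff (Suc K) y j = 0)" if "y \<in> faff cell" for y
    using A_eq[OF _ _ _ that, of "K + 2"] J by (auto simp: subset_iff simp del: masked_preact.simps)
  moreover have "(\<forall>(i, j)\<in>P. A i j y = 0) \<longleftrightarrow> (\<forall>(i, j)\<in>P. cell_aff (i - 1) y j = 0)"
    if "y \<in> faff cell" for y
    using A_eq[OF _ _ _ that] P by fastforce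
  moreover have "(\<forall>(e, j)\<in>system_nodes K P J. cell_aff e y j = 0) \<longleftrightarrow>
      (\<forall>j\<in>J. cell_aff (Suc K) y j = 0) \<and> (\<forall>(i, j)\<in>P. cell_aff (i - 1) y j = 0)" for y
    by (auto simp: system_nodes_def apfst_def map_prod_def simp del: masked_preact.simps)
  ultimately show ?thesis by blast
qed

text \<open>The cell of \<open>C(F_(d+1))\<close> containing \<open>x\<close> satisfies the same equations.\<close>

lemma singleton_cell_of_solution:
  assumes x: "x \<in> cell" and d: "K \<le> d" "d \<le> Suc K" and Z: "Z \<subseteq> layer_nodes N 1 d"
    and sol: "{y \<in> faff cell. \<forall>(e, j)\<in>Z. cell_aff e y j = 0} = {x}"
  shows "{x} \<in> canon N 1 d"
proof -
  let ?T = "sign_cell N 1 d (signs_at N 1 x)"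
  have "?T \<subseteq> {x}"
  proof
    fix z assume z: "z \<in> ?T"
    then have z_cell: "z \<in> cell"
      using sign_cell_signs_at_subset[OF pattern x] sign_cell_mono[OF d(1)] by blast
    have "cell_aff e z j = 0" if "(e, j) \<in> Z" for e j
    proof -
      have ej: "e \<le> d" "j < dims N (1 + e)" using that Z by auto
      then have "preact N 1 e x j = 0" using that sol preact_eq_cell_aff[OF x, of e j] d(2) by auto
      then have "preact N 1 e z j = 0" using preact_zero_on_sign_cell_signs_at[OF z ej] by simp
      then show ?thesis using preact_eq_cell_aff[OF z_cell, of e j] ej(1) d(2) by simp
    qed
    then have "z \<in> {y \<in> faff cell. \<forall>(e, j)\<in>Z. cell_aff e y j = 0}"
      using z_cell subset_faff by blast
    then show "z \<in> {x}" using sol by blast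
  qed
  then have "?T = {x}" using mem_sign_cell_signs_at[of x N 1 d] x cell_subset_Rn by auto
  moreover have "?T \<in> canon N 1 d"
    using x cell_subset_Rn d(2) depth_bound by (intro sign_cell_signs_at_in_canon) auto
  ultimately show ?thesis by simp
qed

text \<open>Induction over the layers: once the earlier layers have the signs of the cell, the nodes of the
  next layer agree with their affine versions \<open>cell_aff\<close>.\<close>

lemma mem_cell_if_sgn_agrees:
  assumes x: "x \<in> Rn (dims N 0)" and z: "z \<in> cell"
    and agree: "\<And>e j. e \<le> K \<Longrightarrow> j < dims N (1 + e) \<Longrightarrow>
      cell_aff e x j = 0 \<or> sgn (preact N 1 e x j) = sgn (preact N 1 e z j)"
  shows "x \<in> cell"
proof -
  have "\<forall>e'<e. \<forall>j<dims N (1 + e'). sign_ok (\<sigma> e' j) (preact N 1 e' x j)" if "e \<le> Suc K" for e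
    using that
  proof (induction e)
    case (Suc e)
    then have IH: "\<forall>e'<e. \<forall>j<dims N (1 + e'). sign_ok (\<sigma> e' j) (preact N 1 e' x j)" by simp
    have x_aff: "preact N 1 e x = masked_preact N 1 (active_mask \<sigma>) e x"
      by (rule preact_eq_masked_preact[OF pattern IH])
    have "sign_ok (\<sigma> e j) (preact N 1 e x j)" if j: "j < dims N (1 + e)" for j
    proof -
      have z_ok: "sign_ok (\<sigma> e j) (preact N 1 e z j)" using z j Suc.prems by (simp add: sign_cell_def)
      show ?thesis
        using agree[of e j] Suc.prems j x_aff sign_ok_sgn_cong[OF z_ok] by (auto simp: sign_ok_0)
    qed
    then show ?case using IH by (auto simp: less_Suc_eq)
  qed simp
  then show ?thesis using x by (auto simp: sign_cell_def less_Suc_eq_le)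
qed

lemma solution_set_at_singleton_cell:
  assumes v: "v \<in> cell" and v_cell: "sign_cell N 1 (Suc K) \<sigma>' = {v}"
  shows "{y \<in> faff cell. \<forall>(e, j)\<in>zero_nodes N 1 (Suc K) v. cell_aff e y j = 0} = {v}"
proof
  have "cell_aff e v j = 0" if "(e, j) \<in> zero_nodes N 1 (Suc K) v" for e j
    using that preact_eq_cell_aff[OF v, of e j] by simp
  then show "{v} \<subseteq> {y \<in> faff cell. \<forall>(e, j)\<in>zero_nodes N 1 (Suc K) v. cell_aff e y j = 0}"
    using v subset_faff by blast
  show "{y \<in> faff cell. \<forall>(e, j)\<in>zero_nodes N 1 (Suc K) v. cell_aff e y j = 0} \<subseteq> {v}"
  proof clarify
    fix y assume y: "y \<in> faff cell" "\<forall>(e, j)\<in>zero_nodes N 1 (Suc K) v. cell_aff e y j = 0"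
    have "y - v \<in> Rn (dims N 0)"
      using y(1) v faff_subset_Rn[OF cell_subset_Rn] cell_subset_Rn by (blast intro: Rn_diff)
    moreover have "cell_lin e j (y - v) = 0" if ej: "(e, j) \<in> zero_nodes N 1 (Suc K) v" for e j
    proof -
      have "cell_aff e y j = 0" using bspec[OF y(2) ej] by simp
      moreover have "cell_aff e v j = 0" using ej preact_eq_cell_aff[OF v, of e j] by simp
      ultimately show ?thesis using cell_aff_diff[of e y j v] by simp
    qed
    ultimately have "y - v = 0" by (rule direction_zero_at_singleton_cell[OF v v_cell])
    then show "y = v" by simp
  qed
qed

end

locale generic_network_cell = network_cell +
  assumes generic: "generic N" and supertransversal: "supertransversal N"
    and width: "dims N 0 \<le> dims N 1"
begin

text \<open>A point of the cell with the most vanishing nodes among those keeping the zeros of \<open>v\<close> is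
  a vertex: through a non-vertex there is a segment in the cell, and walking along it reaches more
  zeros, since by genericity some first-layer node varies along it.\<close>

lemma exists_vertex_keeping_zero_nodes:
  assumes v: "v \<in> cell"
  shows "\<exists>u. is_vertex u cell \<and> zero_nodes N 1 K v \<subseteq> zero_nodes N 1 K u"
proof -
  define F where "F = {y \<in> cell. zero_nodes N 1 K v \<subseteq> zero_nodes N 1 K y}"
  have "\<forall>y. y \<in> F \<longrightarrow> card (zero_nodes N 1 K y) < card (layer_nodes N 1 K) + 1"
  proof (intro allI impI)
    fix y
    have "zero_nodes N 1 K y \<subseteq> layer_nodes N 1 K" by (auto simp: zero_nodes_def)
    then show "card (zero_nodes N 1 K y) < card (layer_nodes N 1 K) + 1"
      using card_mono[OF finite_layer_nodes] by (simp add: less_Suc_eq_le)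
  qed
  moreover have "v \<in> F" using v by (simp add: F_def)
  ultimately obtain u where u: "u \<in> F" "\<And>y. y \<in> F \<Longrightarrow> card (zero_nodes N 1 K y) \<le> card (zero_nodes N 1 K u)"
    using Lattices_Big.ex_has_greatest_nat[of "\<lambda>y. y \<in> F" v "\<lambda>y. card (zero_nodes N 1 K y)"] by blast
  have u_cell: "u \<in> cell" using u(1) by (simp add: F_def)
  have "is_vertex u cell"
    unfolding is_vertex_def
  proof (intro conjI notI u_cell)
    assume "\<exists>a\<in>cell. \<exists>b\<in>cell. a \<noteq> b \<and> (\<exists>t>0. t < 1 \<and> u = (\<lambda>l. (1 - t) * a l + t * b l))"
    then obtain a b t where ab: "a \<in> cell" "b \<in> cell" "a \<noteq> b"
      and t: "0 < t" "t < 1" and u_eq: "u = (\<lambda>l. (1 - t) * a l + t * b l)"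
      by blast
    have d: "b - a \<in> Rn (dims N 0)" "b - a \<noteq> 0" using ab cell_subset_Rn by (auto intro: Rn_diff)
    obtain j0 where j0: "j0 < dims N 1" "cell_lin 0 j0 (b - a) \<noteq> 0"
      using generic_first_layer_separates[OF generic width d] by auto
    have "(0, j0) \<in> layer_nodes N 1 K" using j0(1) by simp
    then obtain y where y: "y \<in> cell" "zero_nodes N 1 K u \<subset> zero_nodes N 1 K y"
      using exists_more_zero_nodes[OF u_cell d(1) cell_lin_zero_on_segment[OF ab(1,2) t u_eq u_cell] _ j0(2)]
      by blast
    then have "y \<in> F" using u(1) by (auto simp: F_def)
    moreover have "card (zero_nodes N 1 K u) < card (zero_nodes N 1 K y)"
      using y(2) by (intro psubset_card_mono) auto
    ultimately show False using u(2) by fastforce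
  qed
  then show ?thesis using u(1) by (auto simp: F_def)
qed

text \<open>At most \<open>n\<^sub>0\<close> by supertransversality, at least \<open>n\<^sub>0\<close> because the linear parts of the vanishing
  nodes have trivial common kernel.\<close>

lemma card_zero_nodes_at_singleton_cell:
  assumes v: "v \<in> cell" and v_cell: "sign_cell N 1 (Suc K) \<sigma>' = {v}"
  shows "card (zero_nodes N 1 (Suc K) v) = dims N 0"
proof (rule antisym)
  let ?Z = "zero_nodes N 1 (Suc K) v"
  show "card ?Z \<le> dims N 0"
    using card_zero_nodes_le[OF generic supertransversal] v cell_subset_Rn depth_bound by auto
  have "dims N 0 \<le> fdim {d \<in> Rn (dims N 0). \<forall>z\<in>?Z. cell_lin (fst z) (snd z) d = 0} + card ?Z"
    by (rule dim_common_kernel[OF finite_zero_nodes affine_form_cell_aff])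
  moreover have "d = 0" if "d \<in> Rn (dims N 0)" "\<forall>z\<in>?Z. cell_lin (fst z) (snd z) d = 0" for d
    by (rule direction_zero_at_singleton_cell[OF v v_cell that(1)]) (drule bspec[OF that(2)], simp)
  then have "{d \<in> Rn (dims N 0). \<forall>z\<in>?Z. cell_lin (fst z) (snd z) d = 0} \<subseteq> fv.span {}"
    by (auto simp: fv.span_empty)
  then have "fdim {d \<in> Rn (dims N 0). \<forall>z\<in>?Z. cell_lin (fst z) (snd z) d = 0} = 0"
    using fv.dim_le_card[of _ "{}"] by fastforce
  ultimately show "dims N 0 \<le> card ?Z" by simp
qed

text \<open>A node not in the system that vanished at a solution in the cell would be an \<open>n\<^sub>0 + 1\<close>-st
  vanishing node.\<close>

lemma sgn_at_solution:
  assumes x: "x \<in> cell" and Z: "Z \<subseteq> layer_nodes N 1 (Suc K)" "card Z = dims N 0"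
    and x_Z: "\<And>e j. (e, j) \<in> Z \<Longrightarrow> cell_aff e x j = 0" and q: "q \<in> frelint cell"
    and ej: "e \<le> K" "j < dims N (1 + e)" "(e, j) \<notin> Z"
  shows "sgn (preact N 1 e x j) = sgn (preact N 1 e q j)"
proof (cases "preact N 1 e q j = 0")
  case True
  then show ?thesis using preact_zero_on_cell[OF q ej(1,2) True x] by simp
next
  case False
  have "preact N 1 e x j \<noteq> 0"
  proof
    assume "preact N 1 e x j = 0"
    moreover have "preact N 1 e' x j' = 0" if "(e', j') \<in> Z" for e' j'
      using that Z(1) x_Z preact_eq_cell_aff[OF x, of e' j'] by auto
    ultimately have "insert (e, j) Z \<subseteq> zero_nodes N 1 (Suc K) x" using Z(1) ej by auto
    then have "card (insert (e, j) Z) \<le> card (zero_nodes N 1 (Suc K) x)"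
      by (rule card_mono[OF finite_zero_nodes])
    also have "\<dots> \<le> dims N 0"
      using card_zero_nodes_le[OF generic supertransversal, of x "Suc K"] x cell_subset_Rn depth_bound
      by auto
    finally show False using Z ej(3) finite_subset[OF Z(1)] by simp
  qed
  moreover have "q \<in> cell" using q by (simp add: frelint_def)
  ultimately show ?thesis
    using sign_ok_same_sgn[of "\<sigma> e j"] pattern x ej(1,2) False
    by (auto simp: sign_pattern_def sign_cell_def)
qed

lemma zero_cell_solves_system:
  assumes A: "\<forall>i\<in>{1..K + 2}. \<forall>j<dims N i.
      affine_fun_on (faff cell) (A i j) \<and> (\<forall>x\<in>cell. A i j x = node N i j x)"
    and v: "{v} \<in> canon N 1 (Suc K)" "v \<in> closure cell" "{v} \<notin> canon N 1 K"
  shows "\<exists>J P. J \<subseteq> {..<dims N (K + 2)} \<and> P \<subseteq> {(i, j). 1 \<le> i \<and> i < K + 2 \<and> j < dims N i} \<and>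
    1 \<le> card J \<and> card J \<le> dims N 0 \<and> card P = dims N 0 - card J \<and>
    (\<exists>u. is_vertex u cell \<and> (\<forall>(i, j)\<in>P. node N i j u = 0)) \<and>
    {x \<in> faff cell. (\<forall>j\<in>J. A (K + 2) j x = 0) \<and> (\<forall>(i, j)\<in>P. A i j x = 0)} = {v}"
proof -
  have v_cell: "v \<in> cell" using v(2) closure_cell by simp
  have "1 + Suc K \<le> depth N + 1" using depth_bound by simp
  then obtain \<sigma>' where "sign_pattern \<sigma>'" "{v} = sign_cell N 1 (Suc K) \<sigma>'"
    by (rule canon_imp_sign_cell[OF le_refl _ v(1)])
  then have \<sigma>': "sign_cell N 1 (Suc K) \<sigma>' = {v}" by simp
  define Z where "Z = zero_nodes N 1 (Suc K) v"
  have "Z \<subseteq> layer_nodes N 1 (Suc K)" by (auto simp: Z_def)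
  then obtain P J where Z: "system_nodes K P J = Z"
    and P: "P \<subseteq> {(i, j). 1 \<le> i \<and> i < K + 2 \<and> j < dims N i}"
    and J: "J \<subseteq> {..<dims N (K + 2)}" "J = {j. (Suc K, j) \<in> Z}"
    by (rule split_system_nodes)
  have fin: "finite P" "finite J"
    using finite_node_pairs[OF P] finite_subset[OF J(1)] by auto
  have card: "card P + card J = dims N 0"
    using card_system_nodes[OF fin, of K] P Z card_zero_nodes_at_singleton_cell[OF v_cell \<sigma>']
    by (force simp: Z_def)
  have sol: "{y \<in> faff cell. \<forall>(e, j)\<in>Z. cell_aff e y j = 0} = {v}"
    unfolding Z_def by (rule solution_set_at_singleton_cell[OF v_cell \<sigma>'])
  have "J \<noteq> {}"
  proof
    assume "J = {}"
    then have "Z \<subseteq> layer_nodes N 1 K" using J(2) by (auto simp: Z_def le_Suc_eq)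
    then show False using singleton_cell_of_solution[OF v_cell _ _ _ sol] v(3) by simp
  qed
  then have "1 \<le> card J" using fin(2) by (simp add: Suc_le_eq card_gt_0_iff)
  moreover obtain u where u: "is_vertex u cell" "zero_nodes N 1 K v \<subseteq> zero_nodes N 1 K u"
    using exists_vertex_keeping_zero_nodes[OF v_cell] by blast
  have "node N i j u = 0" if "(i, j) \<in> P" for i j
  proof -
    have "(i - 1, j) \<in> Z" "1 \<le> i" "i - 1 \<le> K" using that P Z by (force simp: system_nodes_def)+
    then have "(i - 1, j) \<in> zero_nodes N 1 K v" by (simp add: Z_def)
    then have "(i - 1, j) \<in> zero_nodes N 1 K u" using u(2) by blast
    moreover have "i \<le> depth N + 1" using \<open>i - 1 \<le> K\<close> depth_bound by simp
    ultimately show ?thesis using node_eq_preact[of i N j u] \<open>1 \<le> i\<close> by simp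
  qed
  moreover have "{x \<in> faff cell. (\<forall>j\<in>J. A (K + 2) j x = 0) \<and> (\<forall>(i, j)\<in>P. A i j x = 0)} = {v}"
    using system_eq_cell_aff[OF A J(1) P] Z sol by simp
  ultimately show ?thesis using P J(1) card u(1) by (intro exI[of _ J] exI[of _ P]) auto
qed

lemma system_solution_zero_cell_iff:
  assumes A: "\<forall>i\<in>{1..K + 2}. \<forall>j<dims N i.
      affine_fun_on (faff cell) (A i j) \<and> (\<forall>x\<in>cell. A i j x = node N i j x)"
    and J: "J \<subseteq> {..<dims N (K + 2)}" and P: "P \<subseteq> {(i, j). 1 \<le> i \<and> i < K + 2 \<and> j < dims N i}"
    and card: "card J \<le> dims N 0" "card P = dims N 0 - card J"
    and sys: "{y \<in> faff cell. (\<forall>j\<in>J. A (K + 2) j y = 0) \<and> (\<forall>(i, j)\<in>P. A i j y = 0)} = {x}"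
  shows "({x} \<in> canon N 1 (Suc K) \<and> x \<in> closure cell) \<longleftrightarrow>
    (\<forall>i j. 1 \<le> i \<and> i \<le> Suc K \<and> j < dims N i \<and> (i, j) \<notin> P \<longrightarrow>
      sgn_pt N i j x = sgn_cell N i j cell)"
proof -
  define Z where "Z = system_nodes K P J"
  define q where "q = (SOME q. q \<in> frelint cell)"
  have sol: "{y \<in> faff cell. \<forall>(e, j)\<in>Z. cell_aff e y j = 0} = {x}"
    using system_eq_cell_aff[OF A J P] sys by (simp add: Z_def)
  then have x_Z: "cell_aff e x j = 0" if "(e, j) \<in> Z" for e j using that by blast
  have Z: "Z \<subseteq> layer_nodes N 1 (Suc K)" using system_nodes_subset[OF P J] by (simp add: Z_def)
  have card_Z: "card Z = dims N 0"
    using card_system_nodes[of P J K] finite_node_pairs[OF P] finite_subset[OF J] P card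
    by (auto simp: Z_def)
  have q: "q \<in> frelint cell" unfolding q_def using exists_frelint_cell by (rule someI_ex)
  have P_Z: "(Suc e, j) \<in> P \<longleftrightarrow> (e, j) \<in> Z" if "e \<le> K" for e j
    using Suc_mem_iff_mem_system_nodes[of P K e j J] P that by (auto simp: Z_def)
  have sgn_eq: "sgn_pt N (Suc e) j y = sgn (preact N 1 e y j)"
    "sgn_cell N (Suc e) j cell = sgn (preact N 1 e q j)" if "e \<le> K" for e j y
    using that sgn_pt_Suc sgn_cell_Suc depth_bound by (simp_all add: q_def)
  show ?thesis
  proof
    assume "{x} \<in> canon N 1 (Suc K) \<and> x \<in> closure cell"
    then have x: "x \<in> cell" using closure_cell by simp
    show "\<forall>i j. 1 \<le> i \<and> i \<le> Suc K \<and> j < dims N i \<and> (i, j) \<notin> P \<longrightarrow>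
      sgn_pt N i j x = sgn_cell N i j cell"
    proof (intro allI impI)
      fix i j assume ij: "1 \<le> i \<and> i \<le> Suc K \<and> j < dims N i \<and> (i, j) \<notin> P"
      then obtain e where e: "i = Suc e" "e \<le> K" by (cases i) auto
      then show "sgn_pt N i j x = sgn_cell N i j cell"
        using sgn_at_solution[OF x Z card_Z x_Z q, of e j] sgn_eq[OF e(2)] P_Z[OF e(2)] ij by simp
    qed
  next
    assume agree: "\<forall>i j. 1 \<le> i \<and> i \<le> Suc K \<and> j < dims N i \<and> (i, j) \<notin> P \<longrightarrow>
      sgn_pt N i j x = sgn_cell N i j cell"
    have "x \<in> Rn (dims N 0)" using sol faff_subset_Rn[OF cell_subset_Rn] by blast
    then have x: "x \<in> cell"
    proof (rule mem_cell_if_sgn_agrees)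
      show "q \<in> cell" using q by (simp add: frelint_def)
      fix e j assume ej: "e \<le> K" "j < dims N (1 + e)"
      then show "cell_aff e x j = 0 \<or> sgn (preact N 1 e x j) = sgn (preact N 1 e q j)"
        using agree[rule_format, of "Suc e" j] sgn_eq[OF ej(1)] P_Z[OF ej(1)] x_Z
        by (cases "(e, j) \<in> Z") auto
    qed
    then show "{x} \<in> canon N 1 (Suc K) \<and> x \<in> closure cell"
      using singleton_cell_of_solution[OF x _ _ Z sol] closure_cell by simp
  qed
qed

end

theorem lemma23:
  fixes N :: net and k :: nat and C :: "vect set"
  assumes wf: "wf_net N"
    and gen: "generic N"
    and st: "supertransversal N"
    and width: "dims N 0 \<le> dims N 1"
    and k: "2 \<le> k" "k \<le> depth N + 1"
    and C: "C \<in> canon N 1 (k - 2)"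
  shows "(\<forall>i\<in>{1..k}. \<forall>j<dims N i.
            \<exists>A. affine_fun_on (faff C) A \<and> (\<forall>x\<in>C. A x = node N i j x))
       \<and> (\<forall>A :: nat \<Rightarrow> nat \<Rightarrow> vect \<Rightarrow> real.
           (\<forall>i\<in>{1..k}. \<forall>j<dims N i.
              affine_fun_on (faff C) (A i j) \<and> (\<forall>x\<in>C. A i j x = node N i j x)) \<longrightarrow>
           (\<forall>v. {v} \<in> canon N 1 (k - 1) \<and> v \<in> closure C \<and> {v} \<notin> canon N 1 (k - 2) \<longrightarrow>
              (\<exists>J P. J \<subseteq> {..<dims N k} \<and> P \<subseteq> {(i, j). 1 \<le> i \<and> i < k \<and> j < dims N i} \<and>
                 1 \<le> card J \<and> card J \<le> dims N 0 \<and> card P = dims N 0 - card J \<and>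
                 (\<exists>u. is_vertex u C \<and> (\<forall>(i, j)\<in>P. node N i j u = 0)) \<and>
                 {x \<in> faff C. (\<forall>j\<in>J. A k j x = 0) \<and> (\<forall>(i, j)\<in>P. A i j x = 0)} = {v}))
         \<and> (\<forall>J P x. J \<subseteq> {..<dims N k} \<and> P \<subseteq> {(i, j). 1 \<le> i \<and> i < k \<and> j < dims N i} \<and>
                 1 \<le> card J \<and> card J \<le> dims N 0 \<and> card P = dims N 0 - card J \<and>
                 (\<exists>u. is_vertex u C \<and> (\<forall>(i, j)\<in>P. node N i j u = 0)) \<and>
                 {y \<in> faff C. (\<forall>j\<in>J. A k j y = 0) \<and> (\<forall>(i, j)\<in>P. A i j y = 0)} = {x} \<longrightarrow>
              (({x} \<in> canon N 1 (k - 1) \<and> x \<in> closure C) \<longleftrightarrow>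
               (\<forall>i j. 1 \<le> i \<and> i \<le> k - 1 \<and> j < dims N i \<and> (i, j) \<notin> P \<longrightarrow>
                   sgn_pt N i j x = sgn_cell N i j C))))"
proof -
  obtain K where K: "k = K + 2" using k(1) by (metis add.commute le_add_diff_inverse)
  have k_minus: "k - 1 = Suc K" "k - 2 = K" using K by simp_all
  have "1 + K \<le> depth N + 1" using k(2) K by simp
  then obtain \<sigma> where \<sigma>: "sign_pattern \<sigma>" "C = sign_cell N 1 K \<sigma>"
    using C unfolding k_minus by (rule canon_imp_sign_cell[OF le_refl])
  interpret generic_network_cell N K \<sigma>
    using gen st width k(2) K \<sigma> canon_nonempty[OF C] by unfold_locales auto
  show ?thesis
    unfolding k_minus unfolding K \<sigma>(2)
    apply (intro conjI allI impI ballI)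
    subgoal
      using affine_form_imp_affine_fun_on[OF affine_form_cell_aff] node_eq_cell_aff by auto
    subgoal by (rule zero_cell_solves_system) auto
    subgoal by (elim conjE) (rule system_solution_zero_cell_iff)
    done
qed

end
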